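(* Let $P(s)=\sum_{j=0}^{\mathsf d} s^j P_j$ with $P_j\in\mathbb C^{\mathsf n\times\mathsf n}$, $A\in\mathbb C^{\mathsf k\times\mathsf k}$, $B\in\mathbb C^{\mathsf k\times\mathsf n}$, $C\in\mathbb C^{\mathsf n\times\mathsf k}$, $R(s)=P(s)+C(sI_{\mathsf k}-A)^{-1}B$, and consider the iterates $\lambda_\ell$ and basis matrices $W_\ell,V_\ell$ of the subspace method described in the context with interpolation parameter $\mathsf q\ge2$. Let $\lambda_*$ be a simple eigenvalue of $R$ (i.e. $\eta_{\mathsf n}(\lambda_* )=0$ and $\eta_1(\lambda_* ),\dots,\eta_{\mathsf n-1}(\lambda_* )>0$) such that, for a given $\xi>0$, $\sigma_{\min}(A-\lambda_*I_{\mathsf k})\ge\xi$ and $\sigma_{\min}(W_\ell^*AV_\ell-\lambda_*W_\ell^*V_\ell)\ge\xi$, and suppose the Hessian $\nabla^2\eta_{\mathsf n}(\lambda_* )$ is invertible. Then, for consecutive iterates $\lambda_\ell,\lambda_{\ell+1}$ sufficiently close to $\lambda_*$, there exists a constant $C>0$ (independent of $\lambda_1,\dots,\lambda_\ell$ and of the subspaces spanned by $W_\ell,V_\ell$) such that $|\lambda_{\ell+1}-\lambda_*|\le C|\lambda_\ell-\lambda_*|^2$.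
   Context: Subspace method (for given $A,B,C,P$, integer $\mathsf q\ge 2$, target $\tau\in\mathbb C$): set $\lambda_0=\tau$. For $\ell=0,1,2,\dots$: form $\widetilde V_\ell=[(A-\lambda_\ell I)^{-1}B,\dots,(A-\lambda_\ell I)^{-\mathsf q}B]$ and $\widetilde W_\ell=[(A-\lambda_\ell I)^{-*}C^*,\dots,(A-\lambda_\ell I)^{-\mathsf q *}C^*]$ (here $X^{-j*}=((X^* )^{-1})^j$); let $V_0,W_0$ have orthonormal columns spanning the column spaces of $\widetilde V_0,\widetilde W_0$, and for $\ell\ge1$ let $V_\ell,W_\ell$ have orthonormal columns spanning the column spaces of $[V_{\ell-1}\ \widetilde V_\ell]$, $[W_{\ell-1}\ \widetilde W_\ell]$. Then $\lambda_{\ell+1}$ is the eigenvalue (point of singularity) of $R_\ell(s)=P(s)+CV_\ell(sW_\ell^*V_\ell-W_\ell^*AV_\ell)^{-1}W_\ell^*B$ closest to $\tau$. $\eta_1(s)\ge\dots\ge\eta_{\mathsf n}(s)$ denote the eigenvalues of $R(s)^*R(s)$ (squared singular values of $R(s)$). $\nabla^2\eta(s)$ denotes the $2\times2$ Hessian with respect to $(\mathrm{Re}(s),\mathrm{Im}(s))$; $\sigma_{\min}$ is the smallest singular value. *)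

theory Defs
  imports "HOL-Analysis.Analysis" "Jordan_Normal_Form.Schur_Decomposition"
begin

text \<open>Inverse of a square matrix (meaningful when the matrix is invertible).\<close>
definition minv :: "complex mat \<Rightarrow> complex mat" where
  "minv M = (SOME N. N \<in> carrier_mat (dim_row M) (dim_row M) \<and> inverts_mat M N \<and> inverts_mat N M)"

definition hcat :: "complex mat \<Rightarrow> complex mat \<Rightarrow> complex mat" where
  "hcat X Y = mat (dim_row X) (dim_col X + dim_col Y)
     (\<lambda>(i,j). if j < dim_col X then X $$ (i,j) else Y $$ (i, j - dim_col X))"

definition hcat_list :: "nat \<Rightarrow> complex mat list \<Rightarrow> complex mat" where
  "hcat_list m Xs = foldl hcat (0\<^sub>m m 0) Xs"

definition colspace :: "complex mat \<Rightarrow> complex vec set" where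
  "colspace M = {M *\<^sub>v x | x. x \<in> carrier_vec (dim_col M)}"

definition orthonormal_cols :: "complex mat \<Rightarrow> bool" where
  "orthonormal_cols M \<longleftrightarrow> mat_adjoint M * M = 1\<^sub>m (dim_col M)"

definition herm_eigs :: "complex mat \<Rightarrow> real list" where
  "herm_eigs H = rev (sort (map Re (SOME as. char_poly H = (\<Prod>a\<leftarrow>as. [:- a, 1:])
                                              \<and> length as = dim_row H)))"

text \<open>eta j M = j-th largest eigenvalue of M^* M (1-based), i.e. the squared j-th
  singular value of M.\<close>
definition eta :: "nat \<Rightarrow> complex mat \<Rightarrow> real" where
  "eta j M = herm_eigs (mat_adjoint M * M) ! (j - 1)"

definition sigma_min :: "complex mat \<Rightarrow> real" where
  "sigma_min M = sqrt (last (herm_eigs (mat_adjoint M * M)))"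

definition polyP :: "nat \<Rightarrow> (nat \<Rightarrow> complex mat) \<Rightarrow> nat \<Rightarrow> complex \<Rightarrow> complex mat" where
  "polyP n Pc d s = foldr (\<lambda>j M. (s ^ j) \<cdot>\<^sub>m Pc j + M) [0..<Suc d] (0\<^sub>m n n)"

definition Rfun :: "nat \<Rightarrow> (nat \<Rightarrow> complex mat) \<Rightarrow> nat \<Rightarrow> complex mat \<Rightarrow> complex mat
                     \<Rightarrow> complex mat \<Rightarrow> complex \<Rightarrow> complex mat" where
  "Rfun n Pc d A B C s = polyP n Pc d s + C * minv (s \<cdot>\<^sub>m 1\<^sub>m (dim_row A) - A) * B"

definition Rred :: "nat \<Rightarrow> (nat \<Rightarrow> complex mat) \<Rightarrow> nat \<Rightarrow> complex mat \<Rightarrow> complex mat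
                     \<Rightarrow> complex mat \<Rightarrow> complex mat \<Rightarrow> complex mat \<Rightarrow> complex \<Rightarrow> complex mat" where
  "Rred n Pc d A B C V W s = polyP n Pc d s +
      C * V * minv (s \<cdot>\<^sub>m (mat_adjoint W * V) - mat_adjoint W * A * V) * mat_adjoint W * B"

definition red_eigenvalue :: "nat \<Rightarrow> (nat \<Rightarrow> complex mat) \<Rightarrow> nat \<Rightarrow> complex mat \<Rightarrow> complex mat
                     \<Rightarrow> complex mat \<Rightarrow> complex mat \<Rightarrow> complex mat \<Rightarrow> complex \<Rightarrow> bool" where
  "red_eigenvalue n Pc d A B C V W s \<longleftrightarrow>
      invertible_mat (s \<cdot>\<^sub>m (mat_adjoint W * V) - mat_adjoint W * A * V) \<and>
      det (Rred n Pc d A B C V W s) = 0"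

definition Vtil :: "complex mat \<Rightarrow> complex mat \<Rightarrow> nat \<Rightarrow> complex \<Rightarrow> complex mat" where
  "Vtil A B q lam = hcat_list (dim_row A)
     (map (\<lambda>j. (minv (A - lam \<cdot>\<^sub>m 1\<^sub>m (dim_row A)) ^\<^sub>m j) * B) [1..<Suc q])"

definition Wtil :: "complex mat \<Rightarrow> complex mat \<Rightarrow> nat \<Rightarrow> complex \<Rightarrow> complex mat" where
  "Wtil A C q lam = hcat_list (dim_row A)
     (map (\<lambda>j. (minv (mat_adjoint (A - lam \<cdot>\<^sub>m 1\<^sub>m (dim_row A))) ^\<^sub>m j) * mat_adjoint C)
          [1..<Suc q])"

definition subspace_step :: "nat \<Rightarrow> (nat \<Rightarrow> complex mat) \<Rightarrow> nat \<Rightarrow> complex mat \<Rightarrow> complex mat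
     \<Rightarrow> complex mat \<Rightarrow> nat \<Rightarrow> complex \<Rightarrow> (nat \<Rightarrow> complex) \<Rightarrow> (nat \<Rightarrow> complex mat)
     \<Rightarrow> (nat \<Rightarrow> complex mat) \<Rightarrow> nat \<Rightarrow> bool" where
  "subspace_step n Pc d A B C q \<tau> lam V W m \<longleftrightarrow>
     invertible_mat (A - lam m \<cdot>\<^sub>m 1\<^sub>m (dim_row A)) \<and>
     dim_row (V m) = dim_row A \<and> dim_row (W m) = dim_row A \<and>
     orthonormal_cols (V m) \<and> orthonormal_cols (W m) \<and>
     colspace (V m) = colspace (if m = 0 then Vtil A B q (lam m)
                                else hcat (V (m - 1)) (Vtil A B q (lam m))) \<and>
     colspace (W m) = colspace (if m = 0 then Wtil A C q (lam m)
                                else hcat (W (m - 1)) (Wtil A C q (lam m))) \<and>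
     red_eigenvalue n Pc d A B C (V m) (W m) (lam (Suc m)) \<and>
     (\<forall>\<mu>. red_eigenvalue n Pc d A B C (V m) (W m) \<mu> \<longrightarrow>
           cmod (lam (Suc m) - \<tau>) \<le> cmod (\<mu> - \<tau>))"

definition subspace_iterates :: "nat \<Rightarrow> (nat \<Rightarrow> complex mat) \<Rightarrow> nat \<Rightarrow> complex mat \<Rightarrow> complex mat
     \<Rightarrow> complex mat \<Rightarrow> nat \<Rightarrow> complex \<Rightarrow> (nat \<Rightarrow> complex) \<Rightarrow> (nat \<Rightarrow> complex mat)
     \<Rightarrow> (nat \<Rightarrow> complex mat) \<Rightarrow> nat \<Rightarrow> bool" where
  "subspace_iterates n Pc d A B C q \<tau> lam V W l \<longleftrightarrow>
     lam 0 = \<tau> \<and> (\<forall>m\<le>l. subspace_step n Pc d A B C q \<tau> lam V W m)"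

text \<open>H (a real-linear map on C = R^2) is the Hessian of f :: C \<Rightarrow> R at z: f is
  differentiable near z with gradient g, and H is the derivative (Jacobian) of g at z.\<close>
definition hessian_at :: "(complex \<Rightarrow> real) \<Rightarrow> complex \<Rightarrow> (complex \<Rightarrow> complex) \<Rightarrow> bool" where
  "hessian_at f z H \<longleftrightarrow>
     (\<exists>g. (\<forall>\<^sub>F w in nhds z. (f has_derivative (\<lambda>h. g w \<bullet> h)) (at w)) \<and>
          (g has_derivative H) (at z))"

end

theory Submission
  imports Defs
begin

text \<open>
  Let \<open>f(s) = \<eta>\<^sub>n(R(s))\<close>, the squared smallest singular value of \<open>R(s)\<close>. It is nonnegative, vanishes
  at \<open>\<lambda>\<^sub>*\<close> and has an invertible Hessian there, so it grows quadratically: \<open>c |s - \<lambda>\<^sub>*|\<^sup>2 \<le> f(s)\<close>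
  near \<open>\<lambda>\<^sub>*\<close>. On the other hand \<open>\<lambda>\<^sub>l\<^sub>+\<^sub>1\<close> is a singular point of the reduced function \<open>R\<^sub>l\<close>,
  whose realization interpolates that of \<open>R\<close> at \<open>\<lambda>\<^sub>l\<close> from both sides, because the spans of \<open>V\<^sub>l\<close> and
  \<open>W\<^sub>l\<close> contain \<open>(A - \<lambda>\<^sub>l)\<^sup>-\<^sup>1 B\<close> and \<open>(A - \<lambda>\<^sub>l)\<^sup>-\<^sup>* C\<^sup>*\<close>. For a unit null vector \<open>v\<close> of
  \<open>R\<^sub>l(\<lambda>\<^sub>l\<^sub>+\<^sub>1)\<close> this gives \<open>|R(\<lambda>\<^sub>l\<^sub>+\<^sub>1) v| \<le> K |\<lambda>\<^sub>l\<^sub>+\<^sub>1 - \<lambda>\<^sub>l|\<^sup>2\<close> with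
  \<open>K = 16 |B|\<^sub>F |C|\<^sub>F / \<xi>\<^sup>3\<close>, since all shifted matrices involved keep their smallest singular
  value at least \<open>\<xi>/2\<close>. Hence \<open>c e'\<^sup>2 \<le> K\<^sup>2 (e + e')\<^sup>4\<close> for the errors \<open>e, e'\<close> of \<open>\<lambda>\<^sub>l, \<lambda>\<^sub>l\<^sub>+\<^sub>1\<close>, and absorbing
  the small \<open>e'\<close> on the right gives \<open>e' = O(e\<^sup>2)\<close>.
  The positivity of the other singular values and the dimensions of the \<open>P\<^sub>j\<close> are not needed, and \<open>q \<ge> 1\<close>
  would suffice.
\<close>

section \<open>The Euclidean norm on complex vectors\<close>

definition cinner :: "complex vec \<Rightarrow> complex vec \<Rightarrow> complex" where
  "cinner x y = (\<Sum>i<dim_vec x. x $ i * cnj (y $ i))"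

definition cnorm :: "complex vec \<Rightarrow> real" where
  "cnorm x = L2_set (\<lambda>i. cmod (x $ i)) {..<dim_vec x}"

definition frob_norm :: "complex mat \<Rightarrow> real" where
  "frob_norm A = sqrt (\<Sum>i<dim_row A. \<Sum>j<dim_col A. (cmod (A $$ (i,j)))\<^sup>2)"

lemma cnorm_nonneg [simp]: "0 \<le> cnorm x"
  by (simp add: cnorm_def)

lemma frob_norm_nonneg [simp]: "0 \<le> frob_norm A"
  by (simp add: frob_norm_def sum_nonneg)

lemma cnorm_power2: "(cnorm x)\<^sup>2 = (\<Sum>i<dim_vec x. (cmod (x $ i))\<^sup>2)"
  by (simp add: cnorm_def L2_set_def sum_nonneg)

lemma cinner_self: "cinner x x = complex_of_real ((cnorm x)\<^sup>2)"
  unfolding cnorm_power2 cinner_def of_real_sum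
  by (intro sum.cong refl) (metis complex_norm_square of_real_power)

lemma cnorm_power2_eq_cmod_cinner: "(cnorm x)\<^sup>2 = cmod (cinner x x)"
  by (simp add: cinner_self norm_power)

lemma cinner_commute: "dim_vec x = dim_vec y \<Longrightarrow> cinner y x = cnj (cinner x y)"
  unfolding cinner_def by (simp add: mult.commute)

lemma cinner_Cauchy_Schwarz:
  assumes "dim_vec x = dim_vec y"
  shows "cmod (cinner x y) \<le> cnorm x * cnorm y"
proof -
  have "cmod (cinner x y) \<le> (\<Sum>i<dim_vec x. \<bar>cmod (x $ i)\<bar> * \<bar>cmod (y $ i)\<bar>)"
    unfolding cinner_def by (rule order.trans[OF norm_sum]) (simp add: norm_mult)
  also have "\<dots> \<le> L2_set (\<lambda>i. cmod (x $ i)) {..<dim_vec x} * L2_set (\<lambda>i. cmod (y $ i)) {..<dim_vec x}"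
    by (rule L2_set_mult_ineq)
  finally show ?thesis
    using assms by (simp add: cnorm_def)
qed

lemma cnorm_triangle:
  assumes "x \<in> carrier_vec n" "y \<in> carrier_vec n"
  shows "cnorm (x + y) \<le> cnorm x + cnorm y"
proof -
  have "cnorm (x + y) = L2_set (\<lambda>i. cmod (x $ i + y $ i)) {..<n}"
    using assms unfolding cnorm_def by (auto intro: L2_set_cong)
  also have "\<dots> \<le> L2_set (\<lambda>i. cmod (x $ i) + cmod (y $ i)) {..<n}"
    by (intro L2_set_mono) (auto simp: norm_triangle_ineq)
  also have "\<dots> \<le> L2_set (\<lambda>i. cmod (x $ i)) {..<n} + L2_set (\<lambda>i. cmod (y $ i)) {..<n}"
    by (rule L2_set_triangle_ineq)
  finally show ?thesis
    using assms by (simp add: cnorm_def)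
qed

lemma cnorm_smult: "cnorm (c \<cdot>\<^sub>v x) = cmod c * cnorm x"
proof -
  have "cnorm (c \<cdot>\<^sub>v x) = L2_set (\<lambda>i. cmod c * cmod (x $ i)) {..<dim_vec x}"
    unfolding cnorm_def by (auto simp: norm_mult intro: L2_set_cong)
  then show ?thesis
    by (simp add: L2_set_right_distrib cnorm_def)
qed

lemma cnorm_uminus: "cnorm (- x) = cnorm x"
  unfolding cnorm_def by (auto intro: L2_set_cong)

lemma cnorm_triangle_diff:
  assumes "x \<in> carrier_vec n" "y \<in> carrier_vec n"
  shows "cnorm (x - y) \<le> cnorm x + cnorm y"
proof -
  have "x - y = x + - y"
    using assms by auto
  then show ?thesis
    using cnorm_triangle[of x n "- y"] assms by (simp add: cnorm_uminus)
qed

lemma cnorm_eq_0_iff: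
  assumes "x \<in> carrier_vec n"
  shows "cnorm x = 0 \<longleftrightarrow> x = 0\<^sub>v n"
proof
  assume "cnorm x = 0"
  then have "(\<Sum>i<n. (cmod (x $ i))\<^sup>2) = 0"
    using assms cnorm_power2[of x] by simp
  then have "\<forall>i\<in>{..<n}. (cmod (x $ i))\<^sup>2 = 0"
    by (subst (asm) sum_nonneg_eq_0_iff) auto
  then show "x = 0\<^sub>v n"
    using assms by (intro eq_vecI) auto
qed (auto simp: cnorm_def L2_set_def intro: sum.neutral)

lemma cnorm_zero_vec [simp]: "cnorm (0\<^sub>v n) = 0"
  using cnorm_eq_0_iff[of "0\<^sub>v n" n] by simp

lemma cnorm_pos_iff:
  assumes "x \<in> carrier_vec n"
  shows "0 < cnorm x \<longleftrightarrow> x \<noteq> 0\<^sub>v n"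
  using cnorm_eq_0_iff[OF assms] cnorm_nonneg[of x] by linarith

lemma cnorm_mult_mat_vec_le:
  assumes A: "A \<in> carrier_mat m n" and x: "x \<in> carrier_vec n"
  shows "cnorm (A *\<^sub>v x) \<le> frob_norm A * cnorm x"
proof -
  have row: "(cmod ((A *\<^sub>v x) $ i))\<^sup>2 \<le> (\<Sum>j<n. (cmod (A $$ (i,j)))\<^sup>2) * (cnorm x)\<^sup>2"
    if i: "i < m" for i
  proof -
    have "cmod ((A *\<^sub>v x) $ i) \<le> (\<Sum>j<n. \<bar>cmod (A $$ (i,j))\<bar> * \<bar>cmod (x $ j)\<bar>)"
      using A x i
      by (auto simp: scalar_prod_def atLeast0LessThan norm_mult intro!: order.trans[OF norm_sum])
    also have "\<dots> \<le> L2_set (\<lambda>j. cmod (A $$ (i,j))) {..<n} * L2_set (\<lambda>j. cmod (x $ j)) {..<n}"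
      by (rule L2_set_mult_ineq)
    also have "\<dots> = L2_set (\<lambda>j. cmod (A $$ (i,j))) {..<n} * cnorm x"
      using x by (simp add: cnorm_def)
    finally have "(cmod ((A *\<^sub>v x) $ i))\<^sup>2 \<le> (L2_set (\<lambda>j. cmod (A $$ (i,j))) {..<n} * cnorm x)\<^sup>2"
      by (intro power_mono) auto
    also have "\<dots> = (\<Sum>j<n. (cmod (A $$ (i,j)))\<^sup>2) * (cnorm x)\<^sup>2"
      by (simp add: power_mult_distrib L2_set_def sum_nonneg)
    finally show ?thesis .
  qed
  have "(cnorm (A *\<^sub>v x))\<^sup>2 = (\<Sum>i<m. (cmod ((A *\<^sub>v x) $ i))\<^sup>2)"
    using A by (simp add: cnorm_power2)
  also have "\<dots> \<le> (\<Sum>i<m. (\<Sum>j<n. (cmod (A $$ (i,j)))\<^sup>2) * (cnorm x)\<^sup>2)"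
    by (intro sum_mono row) simp
  also have "\<dots> = (frob_norm A * cnorm x)\<^sup>2"
    using A by (simp add: frob_norm_def power_mult_distrib sum_distrib_right sum_nonneg)
  finally show ?thesis
    by (rule power2_le_imp_le) simp
qed

lemma cnorm_unit_vec_0: "0 < n \<Longrightarrow> cnorm (unit_vec n 0) = 1"
proof -
  assume "0 < n"
  have "(\<Sum>i<n. (cmod (unit_vec n 0 $ i))\<^sup>2) = (\<Sum>i<n. if i = 0 then 1 else 0)"
    by (intro sum.cong) (auto simp: unit_vec_def)
  with \<open>0 < n\<close> have "(\<Sum>i<n. (cmod (unit_vec n 0 $ i))\<^sup>2) = 1"
    by simp
  then show ?thesis
    using cnorm_power2[of "unit_vec n 0"] power2_eq_iff_nonneg[of "cnorm (unit_vec n 0)" 1] by simp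
qed

lemma cinner_diff_left: "x \<in> carrier_vec n \<Longrightarrow> y \<in> carrier_vec n \<Longrightarrow> cinner (x - y) z = cinner x z - cinner y z"
  unfolding cinner_def by (simp add: sum_subtractf left_diff_distrib)

lemma cinner_smult_left: "cinner (c \<cdot>\<^sub>v x) z = c * cinner x z"
  unfolding cinner_def by (simp add: sum_distrib_left mult.assoc)

lemma cinner_diff_right:
  "x \<in> carrier_vec n \<Longrightarrow> y \<in> carrier_vec n \<Longrightarrow> z \<in> carrier_vec n \<Longrightarrow> cinner z (x - y) = cinner z x - cinner z y"
  unfolding cinner_def by (simp add: sum_subtractf right_diff_distrib)

lemma cinner_smult_right: "z \<in> carrier_vec n \<Longrightarrow> x \<in> carrier_vec n \<Longrightarrow> cinner z (c \<cdot>\<^sub>v x) = cnj c * cinner z x"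
  unfolding cinner_def by (simp add: sum_distrib_left mult.assoc mult.left_commute)

section \<open>Adjoints, isometries and inverses\<close>

lemma mat_adjoint_carrier [simp]: "A \<in> carrier_mat m n \<Longrightarrow> mat_adjoint A \<in> carrier_mat n m"
  unfolding mat_adjoint_def by auto

lemma mat_adjoint_dims [simp]:
  "dim_row (mat_adjoint A) = dim_col A" "dim_col (mat_adjoint A) = dim_row A"
  unfolding mat_adjoint_def by auto

lemma mat_adjoint_index [simp]:
  "i < dim_col A \<Longrightarrow> j < dim_row A \<Longrightarrow> mat_adjoint A $$ (i,j) = cnj (A $$ (j,i))"
  unfolding mat_adjoint_def by (auto simp: mat_of_rows_def)

lemma cinner_mult_adjoint:
  assumes A: "A \<in> carrier_mat m n" and x: "x \<in> carrier_vec n" and y: "y \<in> carrier_vec m"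
  shows "cinner (A *\<^sub>v x) y = cinner x (mat_adjoint A *\<^sub>v y)"
proof -
  have "cinner (A *\<^sub>v x) y = (\<Sum>i<m. (\<Sum>j<n. A $$ (i,j) * x $ j) * cnj (y $ i))"
    using A x y unfolding cinner_def by (simp add: scalar_prod_def atLeast0LessThan)
  also have "\<dots> = (\<Sum>i<m. \<Sum>j<n. x $ j * (A $$ (i,j) * cnj (y $ i)))"
    by (auto simp: sum_distrib_left sum_distrib_right mult_ac intro!: sum.cong)
  also have "\<dots> = (\<Sum>j<n. \<Sum>i<m. x $ j * (A $$ (i,j) * cnj (y $ i)))"
    by (rule sum.swap)
  also have "\<dots> = cinner x (mat_adjoint A *\<^sub>v y)"
    using A x y unfolding cinner_def
    by (simp add: scalar_prod_def atLeast0LessThan sum_distrib_left)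
  finally show ?thesis .
qed

lemma adjoint_mult_self_mult_vec:
  "N \<in> carrier_mat m n \<Longrightarrow> v \<in> carrier_vec n \<Longrightarrow> (mat_adjoint N * N) *\<^sub>v v = mat_adjoint N *\<^sub>v (N *\<^sub>v v)"
  by (rule assoc_mult_mat_vec[OF mat_adjoint_carrier]) auto

lemma smult_mat_mult_vec:
  "A \<in> carrier_mat m n \<Longrightarrow> v \<in> carrier_vec n \<Longrightarrow> (c \<cdot>\<^sub>m A) *\<^sub>v v = c \<cdot>\<^sub>v (A *\<^sub>v v)"
  for A :: "complex mat"
  by (intro eq_vecI) (auto simp: scalar_prod_def sum_distrib_left mult.assoc)

lemma cnorm_orthonormal_cols:
  assumes V: "V \<in> carrier_mat k p" and oV: "orthonormal_cols V" and y: "y \<in> carrier_vec p"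
  shows "cnorm (V *\<^sub>v y) = cnorm y"
proof -
  have "cinner (V *\<^sub>v y) (V *\<^sub>v y) = cinner y ((mat_adjoint V * V) *\<^sub>v y)"
    using V y by (simp add: cinner_mult_adjoint adjoint_mult_self_mult_vec)
  also have "\<dots> = cinner y y"
    using oV V y unfolding orthonormal_cols_def by simp
  finally have "(cnorm (V *\<^sub>v y))\<^sup>2 = (cnorm y)\<^sup>2"
    by (simp add: cnorm_power2_eq_cmod_cinner)
  then show ?thesis
    by (simp add: power2_eq_iff_nonneg)
qed

lemma cnorm_adjoint_orthonormal_cols_le:
  assumes W: "W \<in> carrier_mat k p" and oW: "orthonormal_cols W" and x: "x \<in> carrier_vec k"
  shows "cnorm (mat_adjoint W *\<^sub>v x) \<le> cnorm x"
proof -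
  define a where "a = mat_adjoint W *\<^sub>v x"
  have a: "a \<in> carrier_vec p"
    unfolding a_def by (rule mult_mat_vec_carrier[OF mat_adjoint_carrier[OF W] x])
  have "(cnorm a)\<^sup>2 = cmod (cinner (W *\<^sub>v a) x)"
    using cinner_mult_adjoint[OF W a x] by (simp add: a_def cnorm_power2_eq_cmod_cinner)
  also have "\<dots> \<le> cnorm a * cnorm x"
    using cinner_Cauchy_Schwarz[of "W *\<^sub>v a" x] cnorm_orthonormal_cols[OF W oW a] W x by simp
  finally show ?thesis
    unfolding a_def[symmetric] power2_eq_square
    by (metis cnorm_nonneg less_eq_real_def mult_le_cancel_left_pos mult_not_zero)
qed

lemma adjoint_mult_self_carrier [simp]: "N \<in> carrier_mat r n \<Longrightarrow> mat_adjoint N * N \<in> carrier_mat n n"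
  by (metis mat_adjoint_carrier mult_carrier_mat)

lemma smult_one_mult_vec: "v \<in> carrier_vec n \<Longrightarrow> (c \<cdot>\<^sub>m 1\<^sub>m n) *\<^sub>v v = c \<cdot>\<^sub>v v"
  for v :: "complex vec"
  by (simp add: smult_mat_mult_vec[OF one_carrier_mat])

lemma shifted_mult_vec:
  fixes A :: "complex mat"
  assumes "A \<in> carrier_mat n n" "v \<in> carrier_vec n"
  shows "(A - c \<cdot>\<^sub>m 1\<^sub>m n) *\<^sub>v v = A *\<^sub>v v - c \<cdot>\<^sub>v v"
    and "(c \<cdot>\<^sub>m 1\<^sub>m n - A) *\<^sub>v v = c \<cdot>\<^sub>v v - A *\<^sub>v v"
  using minus_mult_distrib_mat_vec[OF assms(1) smult_carrier_mat[OF one_carrier_mat] assms(2)]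
    minus_mult_distrib_mat_vec[OF smult_carrier_mat[OF one_carrier_mat] assms]
  by (simp_all add: smult_one_mult_vec[OF assms(2)])

lemma eq_if_minus_eq_zero_vec:
  fixes a b :: "complex vec"
  assumes "a \<in> carrier_vec n" "b \<in> carrier_vec n" "a - b = 0\<^sub>v n"
  shows "a = b"
proof (rule eq_vecI)
  fix i
  assume "i < dim_vec b"
  then show "a $ i = b $ i"
    using arg_cong[OF assms(3), of "\<lambda>v. v $ i"] assms(1,2) by simp
qed (use assms in simp)

lemma cnorm_normalize:
  assumes "x \<in> carrier_vec n" "x \<noteq> 0\<^sub>v n"
  shows "cnorm (complex_of_real (1 / cnorm x) \<cdot>\<^sub>v x) = 1"
  using cnorm_pos_iff[OF assms(1)] assms(2) by (simp add: cnorm_smult norm_divide)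


lemma unit_null_vector:
  fixes M :: "complex mat"
  assumes M: "M \<in> carrier_mat n n" and det: "det M = 0"
  obtains v where "v \<in> carrier_vec n" "cnorm v = 1" "M *\<^sub>v v = 0\<^sub>v n"
proof -
  obtain v0 where v0: "v0 \<in> carrier_vec n" "v0 \<noteq> 0\<^sub>v n" "M *\<^sub>v v0 = 0\<^sub>v n"
    using det det_0_iff_vec_prod_zero[OF M] by auto
  define v where "v = complex_of_real (1 / cnorm v0) \<cdot>\<^sub>v v0"
  have "complex_of_real (1 / cnorm v0) \<cdot>\<^sub>v 0\<^sub>v n = 0\<^sub>v n"
    by (intro eq_vecI) auto
  then have "M *\<^sub>v v = 0\<^sub>v n"
    unfolding v_def using mult_mat_vec[OF M v0(1)] v0(3) by simp
  moreover have "v \<in> carrier_vec n" "cnorm v = 1"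
    unfolding v_def using v0 cnorm_normalize[OF v0(1,2)] by auto
  ultimately show ?thesis
    using that by blast
qed

lemma mult_mat_vec_inverse:
  fixes P Q :: "complex mat"
  assumes "P \<in> carrier_mat m m" "Q \<in> carrier_mat m m" "P * Q = 1\<^sub>m m" "u \<in> carrier_vec m"
  shows "P *\<^sub>v (Q *\<^sub>v u) = u"
  using assms by (simp flip: assoc_mult_mat_vec)

lemma minv_if_injective:
  assumes M: "M \<in> carrier_mat n n"
    and inj: "\<And>x. x \<in> carrier_vec n \<Longrightarrow> M *\<^sub>v x = 0\<^sub>v n \<Longrightarrow> x = 0\<^sub>v n"
  shows "minv M \<in> carrier_mat n n" "M * minv M = 1\<^sub>m n" "minv M * M = 1\<^sub>m n"
proof -
  have "det M \<noteq> 0"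
    using det_0_iff_vec_prod_zero[OF M] inj by auto
  from det_non_zero_imp_unit[OF M this, of "()"]
  obtain Q where "Q \<in> carrier_mat n n" "Q * M = 1\<^sub>m n" "M * Q = 1\<^sub>m n"
    unfolding Units_def ring_mat_def by auto
  then have "\<exists>N. N \<in> carrier_mat (dim_row M) (dim_row M) \<and> inverts_mat M N \<and> inverts_mat N M"
    using M by (auto simp: inverts_mat_def)
  from someI_ex[OF this, folded minv_def]
  show "minv M \<in> carrier_mat n n" "M * minv M = 1\<^sub>m n" "minv M * M = 1\<^sub>m n"
    using M by (auto simp: inverts_mat_def)
qed

definition bounded_below :: "real \<Rightarrow> complex mat \<Rightarrow> bool" where
  "bounded_below a M \<longleftrightarrow> (\<forall>x \<in> carrier_vec (dim_col M). a * cnorm x \<le> cnorm (M *\<^sub>v x))"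

lemma bounded_belowI:
  "M \<in> carrier_mat m n \<Longrightarrow> (\<And>x. x \<in> carrier_vec n \<Longrightarrow> a * cnorm x \<le> cnorm (M *\<^sub>v x)) \<Longrightarrow> bounded_below a M"
  unfolding bounded_below_def by auto

lemma bounded_belowD:
  "M \<in> carrier_mat m n \<Longrightarrow> bounded_below a M \<Longrightarrow> x \<in> carrier_vec n \<Longrightarrow> a * cnorm x \<le> cnorm (M *\<^sub>v x)"
  unfolding bounded_below_def by auto

lemma minv_if_bounded_below:
  assumes M: "M \<in> carrier_mat n n" and a: "0 < a" and low: "bounded_below a M"
  shows "minv M \<in> carrier_mat n n" "M * minv M = 1\<^sub>m n" "minv M * M = 1\<^sub>m n"
    and "y \<in> carrier_vec n \<Longrightarrow> cnorm (minv M *\<^sub>v y) \<le> cnorm y / a"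
proof -
  have "x = 0\<^sub>v n" if x: "x \<in> carrier_vec n" and "M *\<^sub>v x = 0\<^sub>v n" for x
    using bounded_belowD[OF M low x] that a cnorm_eq_0_iff[OF x] cnorm_nonneg[of x]
    by (simp add: mult_le_0_iff)
  note inv = minv_if_injective[OF M this]
  then show "minv M \<in> carrier_mat n n" "M * minv M = 1\<^sub>m n" "minv M * M = 1\<^sub>m n"
    by auto
  assume y: "y \<in> carrier_vec n"
  have "M *\<^sub>v (minv M *\<^sub>v y) = y"
    using inv M y by (simp flip: assoc_mult_mat_vec)
  then have "a * cnorm (minv M *\<^sub>v y) \<le> cnorm y"
    using bounded_belowD[OF M low, of "minv M *\<^sub>v y"] inv y by simp
  then show "cnorm (minv M *\<^sub>v y) \<le> cnorm y / a"
    using a by (simp add: field_simps)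
qed

text \<open>\<open>|x|\<^sup>2 = \<langle>M M\<^sup>-\<^sup>1 x, x\<rangle> = \<langle>M\<^sup>-\<^sup>1 x, M\<^sup>* x\<rangle> \<le> |x| |M\<^sup>* x| / a\<close>\<close>

lemma adjoint_bounded_below:
  assumes M: "M \<in> carrier_mat n n" and a: "0 < a" and low: "bounded_below a M"
  shows "bounded_below a (mat_adjoint M)"
proof (rule bounded_belowI[OF mat_adjoint_carrier[OF M]])
  fix x :: "complex vec"
  assume x: "x \<in> carrier_vec n"
  note inv = minv_if_bounded_below[OF M a low]
  have Mix: "minv M *\<^sub>v x \<in> carrier_vec n" and dim_Mi: "dim_row (minv M) = n"
    using inv x by auto
  have "M *\<^sub>v (minv M *\<^sub>v x) = x"
    using inv M x by (simp flip: assoc_mult_mat_vec)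
  then have "(cnorm x)\<^sup>2 = cmod (cinner (M *\<^sub>v (minv M *\<^sub>v x)) x)"
    by (simp add: cnorm_power2_eq_cmod_cinner)
  also have "\<dots> = cmod (cinner (minv M *\<^sub>v x) (mat_adjoint M *\<^sub>v x))"
    by (simp add: cinner_mult_adjoint[OF M Mix x])
  also have "\<dots> \<le> cnorm (minv M *\<^sub>v x) * cnorm (mat_adjoint M *\<^sub>v x)"
    using M dim_Mi by (intro cinner_Cauchy_Schwarz) simp
  also have "\<dots> \<le> cnorm x / a * cnorm (mat_adjoint M *\<^sub>v x)"
    using inv(4)[OF x] by (intro mult_right_mono) auto
  finally have "cnorm x * (a * cnorm x) \<le> cnorm x * cnorm (mat_adjoint M *\<^sub>v x)"
    using a by (simp add: power2_eq_square field_simps)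
  then show "a * cnorm x \<le> cnorm (mat_adjoint M *\<^sub>v x)"
    using cnorm_nonneg[of x] by (cases "cnorm x = 0") (simp_all add: mult_le_cancel_left)
qed

section \<open>The smallest eigenvalue of \<open>N\<^sup>* N\<close>\<close>

lemma cinner_adjoint_mult_self:
  assumes N: "N \<in> carrier_mat r n" and x: "x \<in> carrier_vec n" and y: "y \<in> carrier_vec n"
  shows "cinner ((mat_adjoint N * N) *\<^sub>v x) y = cinner (N *\<^sub>v x) (N *\<^sub>v y)"
proof -
  have "cinner ((mat_adjoint N * N) *\<^sub>v x) y = cnj (cinner y (mat_adjoint N *\<^sub>v (N *\<^sub>v x)))"
    unfolding adjoint_mult_self_mult_vec[OF N x] using N y by (intro cinner_commute) (simp add: carrier_vecD)
  also have "\<dots> = cnj (cinner (N *\<^sub>v y) (N *\<^sub>v x))"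
    using N x y by (simp add: cinner_mult_adjoint)
  also have "\<dots> = cinner (N *\<^sub>v x) (N *\<^sub>v y)"
    using cinner_commute[of "N *\<^sub>v x" "N *\<^sub>v y"] by simp
  finally show ?thesis .
qed

lemma eigenvalue_adjoint_mult_self_eq:
  assumes N: "N \<in> carrier_mat r n" and v: "v \<in> carrier_vec n" "v \<noteq> 0\<^sub>v n"
    and ev: "(mat_adjoint N * N) *\<^sub>v v = a \<cdot>\<^sub>v v"
  shows "a = complex_of_real ((cnorm (N *\<^sub>v v))\<^sup>2 / (cnorm v)\<^sup>2)"
proof -
  have "complex_of_real ((cnorm (N *\<^sub>v v))\<^sup>2) = cinner ((mat_adjoint N * N) *\<^sub>v v) v"
    by (simp add: cinner_adjoint_mult_self[OF N v(1) v(1)] cinner_self)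
  also have "\<dots> = a * complex_of_real ((cnorm v)\<^sup>2)"
    by (simp add: ev cinner_smult_left cinner_self)
  finally show ?thesis
    using cnorm_pos_iff[OF v(1)] v(2) by (simp add: field_simps)
qed

text \<open>For a positive semidefinite Hermitian \<open>G\<close>, evaluate the quadratic form at
  \<open>x - G x / K\<close> with \<open>K = |G|\<^sub>F + 1\<close>.\<close>

lemma psd_hermitian_cnorm_power2_le:
  assumes G: "G \<in> carrier_mat n n"
    and herm: "\<And>x y. x \<in> carrier_vec n \<Longrightarrow> y \<in> carrier_vec n \<Longrightarrow> cinner (G *\<^sub>v x) y = cinner x (G *\<^sub>v y)"
    and psd: "\<And>x. x \<in> carrier_vec n \<Longrightarrow> 0 \<le> Re (cinner (G *\<^sub>v x) x)"
    and x: "x \<in> carrier_vec n"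
  shows "(cnorm (G *\<^sub>v x))\<^sup>2 \<le> (frob_norm G + 1) * Re (cinner (G *\<^sub>v x) x)"
proof -
  define K where "K = frob_norm G + 1"
  have K: "0 < K"
    unfolding K_def using frob_norm_nonneg[of G] by linarith
  define g where "g = G *\<^sub>v x"
  define t where "t = 1 / K"
  define y where "y = x - complex_of_real t \<cdot>\<^sub>v g"
  have g: "g \<in> carrier_vec n" and Gg: "G *\<^sub>v g \<in> carrier_vec n" and y: "y \<in> carrier_vec n"
    unfolding g_def y_def using G x by auto
  have Gy: "G *\<^sub>v y = g - complex_of_real t \<cdot>\<^sub>v (G *\<^sub>v g)"
    unfolding y_def using G x g by (simp add: mult_minus_distrib_mat_vec mult_mat_vec g_def)
  have "cinner (G *\<^sub>v y) y = cinner (g - complex_of_real t \<cdot>\<^sub>v (G *\<^sub>v g)) (x - complex_of_real t \<cdot>\<^sub>v g)"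
    unfolding Gy by (simp only: y_def)
  also have "\<dots> = cinner g x - 2 * complex_of_real t * cinner g g
      + (complex_of_real t)\<^sup>2 * cinner (G *\<^sub>v g) g"
  proof -
    have "cinner (G *\<^sub>v g) x = cinner g g"
      using herm[OF g x] by (simp add: g_def)
    then show ?thesis
      using x g Gg
      by (simp add: cinner_diff_left cinner_diff_right cinner_smult_left cinner_smult_right
          algebra_simps power2_eq_square)
  qed
  finally have "Re (cinner (G *\<^sub>v y) y)
      = Re (cinner g x) - 2 * t * (cnorm g)\<^sup>2 + t\<^sup>2 * Re (cinner (G *\<^sub>v g) g)"
    by (simp add: cinner_self power2_eq_square)
  also have "Re (cinner (G *\<^sub>v g) g) \<le> K * (cnorm g)\<^sup>2"
  proof -
    have "Re (cinner (G *\<^sub>v g) g) \<le> cmod (cinner (G *\<^sub>v g) g)"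
      by (rule complex_Re_le_cmod)
    also have "\<dots> \<le> cnorm (G *\<^sub>v g) * cnorm g"
      using G g by (intro cinner_Cauchy_Schwarz) (simp add: carrier_vecD carrier_matD)
    also have "\<dots> \<le> (frob_norm G * cnorm g) * cnorm g"
      using cnorm_mult_mat_vec_le[OF G g] by (intro mult_right_mono) auto
    also have "\<dots> \<le> K * (cnorm g)\<^sup>2"
      unfolding K_def by (simp add: power2_eq_square algebra_simps)
    finally show ?thesis .
  qed
  then have "Re (cinner g x) - 2 * t * (cnorm g)\<^sup>2 + t\<^sup>2 * Re (cinner (G *\<^sub>v g) g)
      \<le> Re (cinner g x) - 2 * t * (cnorm g)\<^sup>2 + t\<^sup>2 * (K * (cnorm g)\<^sup>2)"
    by (intro add_left_mono mult_left_mono) auto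
  also have "\<dots> = Re (cinner g x) - (cnorm g)\<^sup>2 / K"
    unfolding t_def using K by (simp add: field_simps power2_eq_square)
  finally have "0 \<le> Re (cinner g x) - (cnorm g)\<^sup>2 / K"
    using psd[OF y] by linarith
  then show ?thesis
    using K unfolding K_def[symmetric] g_def by (simp add: field_simps)
qed

lemma rayleigh_infimum:
  assumes N: "N \<in> carrier_mat r n" and n: "0 < n"
  obtains m where "\<forall>x \<in> carrier_vec n. m * (cnorm x)\<^sup>2 \<le> (cnorm (N *\<^sub>v x))\<^sup>2"
    and "\<forall>e > 0. \<exists>x \<in> carrier_vec n. cnorm x = 1 \<and> (cnorm (N *\<^sub>v x))\<^sup>2 < m + e"
proof
  define S where "S = {(cnorm (N *\<^sub>v x))\<^sup>2 | x. x \<in> carrier_vec n \<and> cnorm x = 1}"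
  have S_ne: "S \<noteq> {}"
    unfolding S_def using cnorm_unit_vec_0[OF n] by (auto intro!: exI[of _ "unit_vec n 0"])
  have bdd: "bdd_below S"
    unfolding S_def by (intro bdd_belowI[of _ 0]) auto
  show "\<forall>x \<in> carrier_vec n. Inf S * (cnorm x)\<^sup>2 \<le> (cnorm (N *\<^sub>v x))\<^sup>2"
  proof
    fix x :: "complex vec"
    assume x: "x \<in> carrier_vec n"
    show "Inf S * (cnorm x)\<^sup>2 \<le> (cnorm (N *\<^sub>v x))\<^sup>2"
    proof (cases "x = 0\<^sub>v n")
      case False
      define u where "u = complex_of_real (1 / cnorm x) \<cdot>\<^sub>v x"
      have "u \<in> carrier_vec n" "cnorm u = 1"
        unfolding u_def using x cnorm_normalize[OF x False] by auto
      then have "Inf S \<le> (cnorm (N *\<^sub>v u))\<^sup>2"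
        using bdd by (intro cInf_lower) (auto simp: S_def)
      also have "\<dots> = (cnorm (N *\<^sub>v x))\<^sup>2 / (cnorm x)\<^sup>2"
        unfolding u_def using N x
        by (simp add: mult_mat_vec cnorm_smult norm_divide power_divide power_mult_distrib)
      finally show ?thesis
        using cnorm_pos_iff[OF x] False by (simp add: field_simps)
    qed (use N in simp)
  qed
  show "\<forall>e > 0. \<exists>x \<in> carrier_vec n. cnorm x = 1 \<and> (cnorm (N *\<^sub>v x))\<^sup>2 < Inf S + e"
  proof (intro allI impI)
    fix e :: real
    assume "0 < e"
    have "Inf S < Inf S + e"
      using \<open>0 < e\<close> by simp
    then have "\<exists>s\<in>S. s < Inf S + e"
      using cInf_less_iff[OF S_ne bdd] by blast
    then show "\<exists>x \<in> carrier_vec n. cnorm x = 1 \<and> (cnorm (N *\<^sub>v x))\<^sup>2 < Inf S + e"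
      unfolding S_def by auto
  qed
qed

lemma cinner_shifted_gram:
  fixes N :: "complex mat" and m :: real
  assumes N: "N \<in> carrier_mat r n" and x: "x \<in> carrier_vec n" and y: "y \<in> carrier_vec n"
  defines "G \<equiv> mat_adjoint N * N - complex_of_real m \<cdot>\<^sub>m 1\<^sub>m n"
  shows "cinner (G *\<^sub>v x) y = cinner (N *\<^sub>v x) (N *\<^sub>v y) - complex_of_real m * cinner x y"
    and "cinner (G *\<^sub>v x) y = cinner x (G *\<^sub>v y)"
proof -
  have Gv: "G *\<^sub>v v = (mat_adjoint N * N) *\<^sub>v v - complex_of_real m \<cdot>\<^sub>v v" if v: "v \<in> carrier_vec n" for v
    unfolding G_def by (rule shifted_mult_vec(1)[OF adjoint_mult_self_carrier[OF N] v])
  have quad: "cinner (G *\<^sub>v u) w = cinner (N *\<^sub>v u) (N *\<^sub>v w) - complex_of_real m * cinner u w"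
    if u: "u \<in> carrier_vec n" and w: "w \<in> carrier_vec n" for u w
    unfolding Gv[OF u] cinner_adjoint_mult_self[OF N u w, symmetric]
    using mult_mat_vec_carrier[OF adjoint_mult_self_carrier[OF N] u] u
    by (simp add: cinner_diff_left cinner_smult_left)
  then show "cinner (G *\<^sub>v x) y = cinner (N *\<^sub>v x) (N *\<^sub>v y) - complex_of_real m * cinner x y"
    using x y .
  have "cinner x (G *\<^sub>v y) = cnj (cinner (G *\<^sub>v y) x)"
    using x y N unfolding G_def by (intro cinner_commute) (simp add: carrier_vecD)
  also have "\<dots> = cnj (cinner (N *\<^sub>v y) (N *\<^sub>v x)) - complex_of_real m * cnj (cinner y x)"
    using quad[OF y x] by simp
  also have "\<dots> = cinner (N *\<^sub>v x) (N *\<^sub>v y) - complex_of_real m * cinner x y"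
    using cinner_commute[of "N *\<^sub>v x" "N *\<^sub>v y"] cinner_commute[of x y] x y N
    by (simp add: carrier_vecD)
  finally show "cinner (G *\<^sub>v x) y = cinner x (G *\<^sub>v y)"
    using quad[OF x y] by simp
qed

text \<open>If \<open>m\<close> were no eigenvalue of \<open>N\<^sup>* N\<close>, then \<open>G = N\<^sup>* N - m I\<close> would be invertible and
  positive semidefinite, so that \<open>|x|\<^sup>2 \<le> c |G x|\<^sup>2 \<le> c' Re \<langle>G x, x\<rangle>\<close>, contradicting
  \<open>inf Re \<langle>G x, x\<rangle> = 0\<close> on unit vectors.\<close>

lemma rayleigh_infimum_is_eigenvalue:
  assumes N: "N \<in> carrier_mat r n"
    and low: "\<forall>x \<in> carrier_vec n. m * (cnorm x)\<^sup>2 \<le> (cnorm (N *\<^sub>v x))\<^sup>2"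
    and approx: "\<forall>e > 0. \<exists>x \<in> carrier_vec n. cnorm x = 1 \<and> (cnorm (N *\<^sub>v x))\<^sup>2 < m + e"
  shows "\<exists>v. v \<in> carrier_vec n \<and> v \<noteq> 0\<^sub>v n \<and> (mat_adjoint N * N) *\<^sub>v v = complex_of_real m \<cdot>\<^sub>v v"
proof (rule ccontr)
  assume no_ev: "\<nexists>v. v \<in> carrier_vec n \<and> v \<noteq> 0\<^sub>v n \<and> (mat_adjoint N * N) *\<^sub>v v = complex_of_real m \<cdot>\<^sub>v v"
  define G where "G = mat_adjoint N * N - complex_of_real m \<cdot>\<^sub>m 1\<^sub>m n"
  have G: "G \<in> carrier_mat n n"
    unfolding G_def by (intro minus_carrier_mat smult_carrier_mat one_carrier_mat)
  have "x = 0\<^sub>v n" if x: "x \<in> carrier_vec n" and Gx: "G *\<^sub>v x = 0\<^sub>v n" for x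
  proof -
    have "(mat_adjoint N * N) *\<^sub>v x - complex_of_real m \<cdot>\<^sub>v x = 0\<^sub>v n"
      using Gx unfolding G_def shifted_mult_vec(1)[OF adjoint_mult_self_carrier[OF N] x] .
    then have "(mat_adjoint N * N) *\<^sub>v x = complex_of_real m \<cdot>\<^sub>v x"
      by (rule eq_if_minus_eq_zero_vec[rotated 2])
        (use mult_mat_vec_carrier[OF adjoint_mult_self_carrier[OF N] x] x in auto)
    then show ?thesis
      using no_ev x by blast
  qed
  note Gi = minv_if_injective[OF G this]
  have herm: "cinner (G *\<^sub>v x) y = cinner x (G *\<^sub>v y)" if "x \<in> carrier_vec n" "y \<in> carrier_vec n" for x y
    unfolding G_def by (rule cinner_shifted_gram(2)[OF N that])
  have Re_G: "Re (cinner (G *\<^sub>v x) x) = (cnorm (N *\<^sub>v x))\<^sup>2 - m * (cnorm x)\<^sup>2" if "x \<in> carrier_vec n" for x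
    using cinner_shifted_gram(1)[OF N that that, of m] unfolding G_def by (simp add: cinner_self)
  have psd: "0 \<le> Re (cinner (G *\<^sub>v x) x)" if "x \<in> carrier_vec n" for x
    using bspec[OF low that] unfolding Re_G[OF that] by simp
  define K where "K = (frob_norm (minv G))\<^sup>2 * (frob_norm G + 1)"
  have K: "0 \<le> K"
    unfolding K_def by simp
  have "0 < 1 / (K + 1)"
    using K by simp
  then obtain x where x: "x \<in> carrier_vec n" "cnorm x = 1" and small: "(cnorm (N *\<^sub>v x))\<^sup>2 < m + 1 / (K + 1)"
    using approx by blast
  have "minv G *\<^sub>v (G *\<^sub>v x) = x"
    using Gi G x by (simp flip: assoc_mult_mat_vec)
  then have "1 \<le> (frob_norm (minv G) * cnorm (G *\<^sub>v x))\<^sup>2"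
    using cnorm_mult_mat_vec_le[OF Gi(1), of "G *\<^sub>v x"] G x by (simp add: power_mono)
  also have "\<dots> \<le> (frob_norm (minv G))\<^sup>2 * ((frob_norm G + 1) * Re (cinner (G *\<^sub>v x) x))"
    unfolding power_mult_distrib using psd_hermitian_cnorm_power2_le[OF G herm psd x(1)]
    by (intro mult_left_mono) auto
  also have "\<dots> = K * ((cnorm (N *\<^sub>v x))\<^sup>2 - m)"
    using Re_G[OF x(1)] x(2) by (simp add: K_def)
  also have "\<dots> \<le> K * (1 / (K + 1))"
    using small K by (intro mult_left_mono) auto
  also have "\<dots> < 1"
    using K by (simp add: field_simps)
  finally show False
    by simp
qed

lemma last_rev_sort:
  fixes xs :: "'a::linorder list"
  assumes "xs \<noteq> []"
  shows "last (rev (sort xs)) = Min (set xs)"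
proof -
  have "sort xs \<noteq> []"
    using assms by (metis set_empty set_sort)
  then obtain y ys where "sort xs = y # ys"
    by (cases "sort xs") auto
  moreover have "sorted (y # ys)"
    using \<open>sort xs = y # ys\<close> by (metis sorted_sort)
  then have "Min (set (y # ys)) = y"
    by (auto intro: Min_insert2)
  ultimately show ?thesis
    by (metis set_sort last_rev list.sel(1))
qed

lemma herm_eigs_char_poly:
  assumes H: "H \<in> carrier_mat n n"
  obtains as where "char_poly H = (\<Prod>a\<leftarrow>as. [:- a, 1:])" "length as = n"
    "herm_eigs H = rev (sort (map Re as))"
proof -
  let ?P = "\<lambda>as. char_poly H = (\<Prod>a\<leftarrow>as. [:- a, 1:]) \<and> length as = dim_row H"
  have "\<exists>as. ?P as"
    using char_poly_factorized[OF H] H by auto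
  from someI_ex[OF this] show ?thesis
    using H that unfolding herm_eigs_def by auto
qed

lemma last_herm_eigs_adjoint_mult_self:
  assumes N: "N \<in> carrier_mat r n" and n: "0 < n"
  shows last_herm_eigs_nonneg: "0 \<le> last (herm_eigs (mat_adjoint N * N))"
    and last_herm_eigs_le_rayleigh:
      "x \<in> carrier_vec n \<Longrightarrow> last (herm_eigs (mat_adjoint N * N)) * (cnorm x)\<^sup>2 \<le> (cnorm (N *\<^sub>v x))\<^sup>2"
proof -
  define H where "H = mat_adjoint N * N"
  have H: "H \<in> carrier_mat n n"
    unfolding H_def using N by simp
  obtain as where as: "char_poly H = (\<Prod>a\<leftarrow>as. [:- a, 1:])" "length as = n"
    "herm_eigs H = rev (sort (map Re as))"
    using herm_eigs_char_poly[OF H] .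
  have ne: "map Re as \<noteq> []"
    using as(2) n by auto
  have last_eq: "last (herm_eigs H) = Min (Re ` set as)"
    using as(3) last_rev_sort[OF ne] by simp
  have root_iff: "a \<in> set as \<longleftrightarrow> (\<exists>v. v \<in> carrier_vec n \<and> v \<noteq> 0\<^sub>v n \<and> H *\<^sub>v v = a \<cdot>\<^sub>v v)" for a
  proof -
    have "a \<in> set as \<longleftrightarrow> poly (char_poly H) a = 0"
      unfolding as(1) poly_prod_list_zero_iff by auto
    also have "\<dots> \<longleftrightarrow> eigenvalue H a"
      using eigenvalue_root_char_poly[OF H] by simp
    finally show ?thesis
      using H unfolding eigenvalue_def eigenvector_def by auto
  qed
  have "Min (Re ` set as) \<in> Re ` set as"
    using ne by (intro Min_in) auto
  then obtain a where a: "a \<in> set as" "last (herm_eigs H) = Re a"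
    using last_eq by auto
  then obtain v where "v \<in> carrier_vec n" "v \<noteq> 0\<^sub>v n" "H *\<^sub>v v = a \<cdot>\<^sub>v v"
    using root_iff by blast
  from eigenvalue_adjoint_mult_self_eq[OF N this[unfolded H_def]]
  show "0 \<le> last (herm_eigs (mat_adjoint N * N))"
    using a(2) unfolding H_def by simp
  assume x: "x \<in> carrier_vec n"
  obtain m where m: "\<forall>x \<in> carrier_vec n. m * (cnorm x)\<^sup>2 \<le> (cnorm (N *\<^sub>v x))\<^sup>2"
    and approx: "\<forall>e > 0. \<exists>x \<in> carrier_vec n. cnorm x = 1 \<and> (cnorm (N *\<^sub>v x))\<^sup>2 < m + e"
    by (rule rayleigh_infimum[OF N n])
  from rayleigh_infimum_is_eigenvalue[OF N m approx]
  obtain v where "v \<in> carrier_vec n" "v \<noteq> 0\<^sub>v n" "H *\<^sub>v v = complex_of_real m \<cdot>\<^sub>v v"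
    unfolding H_def by blast
  then have "complex_of_real m \<in> set as"
    using root_iff by blast
  then have "m \<in> Re ` set as"
    by (metis Re_complex_of_real image_eqI)
  then have "last (herm_eigs H) \<le> m"
    unfolding last_eq by simp
  then have "last (herm_eigs H) * (cnorm x)\<^sup>2 \<le> m * (cnorm x)\<^sup>2"
    by (intro mult_right_mono) auto
  also have "\<dots> \<le> (cnorm (N *\<^sub>v x))\<^sup>2"
    using m x by blast
  finally show "last (herm_eigs (mat_adjoint N * N)) * (cnorm x)\<^sup>2 \<le> (cnorm (N *\<^sub>v x))\<^sup>2"
    unfolding H_def .
qed

lemma eta_eq_last_herm_eigs:
  assumes M: "M \<in> carrier_mat n n" and n: "0 < n"
  shows "eta n M = last (herm_eigs (mat_adjoint M * M))"
proof -
  obtain as where "length as = n" "herm_eigs (mat_adjoint M * M) = rev (sort (map Re as))"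
    using herm_eigs_char_poly[OF adjoint_mult_self_carrier[OF M]] by metis
  then have "length (herm_eigs (mat_adjoint M * M)) = n"
    by simp
  with n have "herm_eigs (mat_adjoint M * M) \<noteq> []" "length (herm_eigs (mat_adjoint M * M)) = n"
    by (metis length_greater_0_conv)+
  then show ?thesis
    unfolding eta_def using n by (simp add: last_conv_nth)
qed

lemma eta_nonneg: "M \<in> carrier_mat n n \<Longrightarrow> 0 < n \<Longrightarrow> 0 \<le> eta n M"
  by (simp add: eta_eq_last_herm_eigs last_herm_eigs_nonneg)

lemma eta_le_cnorm_power2:
  assumes "M \<in> carrier_mat n n" "0 < n" "v \<in> carrier_vec n" "cnorm v = 1"
  shows "eta n M \<le> (cnorm (M *\<^sub>v v))\<^sup>2"
  using last_herm_eigs_le_rayleigh[OF assms(1-3)] assms by (simp add: eta_eq_last_herm_eigs)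

lemma sigma_min_bounded_below:
  assumes N: "N \<in> carrier_mat n n" and \<xi>: "\<xi> \<le> sigma_min N"
  shows "bounded_below \<xi> N"
proof (rule bounded_belowI[OF N])
  fix x :: "complex vec"
  assume x: "x \<in> carrier_vec n"
  show "\<xi> * cnorm x \<le> cnorm (N *\<^sub>v x)"
  proof (cases "n = 0")
    case True
    then have "cnorm x = 0"
      using x cnorm_power2[of x] by simp
    then show ?thesis
      by simp
  next
    case False
    define L where "L = last (herm_eigs (mat_adjoint N * N))"
    have L: "0 \<le> L"
      unfolding L_def using last_herm_eigs_nonneg[OF N] False by simp
    have "\<xi> * cnorm x \<le> sqrt L * cnorm x"
      using \<xi> unfolding sigma_min_def L_def[symmetric] by (intro mult_right_mono) auto
    also have "\<dots> = sqrt (L * (cnorm x)\<^sup>2)"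
      by (simp add: real_sqrt_mult)
    also have "\<dots> \<le> sqrt ((cnorm (N *\<^sub>v x))\<^sup>2)"
      unfolding L_def using last_herm_eigs_le_rayleigh[OF N _ x] False by (intro real_sqrt_le_mono) simp
    finally show ?thesis
      by simp
  qed
qed

section \<open>Quadratic growth at a nondegenerate minimum\<close>

lemma le_0_if_le_epsilon_mult:
  fixes x S :: real
  assumes "\<And>e. 0 < e \<Longrightarrow> x \<le> e * S" and "0 \<le> S"
  shows "x \<le> 0"
proof (rule field_le_epsilon)
  fix e :: real
  assume e: "0 < e"
  have "x \<le> e / (S + 1) * S"
    using assms(1)[of "e / (S + 1)"] assms(2) e by simp
  also have "\<dots> \<le> e"
    using assms(2) e by (simp add: field_simps)
  finally show "x \<le> 0 + e"
    by simp
qed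

lemma scaled_radius_bounds:
  fixes c d :: real
  assumes "0 < d" "0 \<le> c"
  shows "0 < d / (2 * (c + 1))" "d / (2 * (c + 1)) * c < d"
proof -
  have p: "0 < 2 * (c + 1)"
    using assms by simp
  then show "0 < d / (2 * (c + 1))"
    using assms by simp
  have "c / (2 * (c + 1)) < 1"
    using p assms by (simp add: field_simps)
  then have "d * (c / (2 * (c + 1))) < d * 1"
    using assms by (intro mult_strict_left_mono)
  then show "d / (2 * (c + 1)) * c < d"
    by simp
qed

lemma has_real_derivative_along_line:
  fixes f :: "'a::real_inner \<Rightarrow> real"
  assumes "(f has_derivative (\<lambda>k. g \<bullet> k)) (at (z + t *\<^sub>R h))"
  shows "((\<lambda>s. f (z + s *\<^sub>R h)) has_real_derivative (g \<bullet> h)) (at t)"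
proof -
  have "((\<lambda>s. z + s *\<^sub>R h) has_derivative (\<lambda>s. s *\<^sub>R h)) (at t)"
    by (auto intro!: derivative_eq_intros)
  from has_derivative_compose[OF this assms]
  have "((\<lambda>s. f (z + s *\<^sub>R h)) has_derivative (\<lambda>s. g \<bullet> (s *\<^sub>R h))) (at t)" .
  moreover have "(\<lambda>s. g \<bullet> (s *\<^sub>R h)) = (*) (g \<bullet> h)"
    by (auto simp: mult.commute)
  ultimately show ?thesis
    unfolding has_field_derivative_def by simp
qed

text \<open>Here \<open>g\<close> is a gradient of \<open>f\<close> near \<open>z\<close>, but \<open>H\<close> is only the derivative of \<open>g\<close> at \<open>z\<close>
  (as in \<^const>\<open>hessian_at\<close>), so second-order information comes from the mean value theorem along
  segments.\<close>

lemma second_order_expansion_at_critical_point: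
  fixes f :: "'a::real_inner \<Rightarrow> real" and g H :: "'a \<Rightarrow> 'a"
  assumes grad: "\<forall>\<^sub>F w in nhds z. (f has_derivative (\<lambda>h. g w \<bullet> h)) (at w)"
    and hess: "(g has_derivative H) (at z)" and crit: "g z = 0"
    and e: "0 < e"
  shows "\<exists>d>0. \<forall>h. norm h < d \<longrightarrow> \<bar>f (z + h) - f z - H h \<bullet> h / 2\<bar> \<le> e * (norm h)\<^sup>2"
proof -
  interpret H: bounded_linear H
    using hess by (rule has_derivative_bounded_linear)
  obtain r where r: "0 < r" "\<And>w. dist w z < r \<Longrightarrow> (f has_derivative (\<lambda>h. g w \<bullet> h)) (at w)"
    using grad unfolding eventually_nhds_metric by blast
  obtain d1 where d1: "0 < d1" "\<And>w. norm (w - z) < d1 \<Longrightarrow> norm (g w - H (w - z)) \<le> e * norm (w - z)"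
    using hess[unfolded has_derivative_at_alt] e crit by fastforce
  define d where "d = min d1 r"
  have "\<bar>f (z + h) - f z - H h \<bullet> h / 2\<bar> \<le> e * (norm h)\<^sup>2" if h: "norm h < d" for h
  proof -
    define \<phi> where "\<phi> t = f (z + t *\<^sub>R h) - t\<^sup>2 / 2 * (H h \<bullet> h)" for t
    define \<phi>' where "\<phi>' t = g (z + t *\<^sub>R h) \<bullet> h - t * (H h \<bullet> h)" for t
    have small: "norm (t *\<^sub>R h) < d" if "0 \<le> t" "t \<le> 1" for t
    proof -
      have "norm (t *\<^sub>R h) \<le> norm h"
        using that by (simp add: mult_left_le_one_le)
      then show ?thesis
        using h by linarith
    qed
    have "(\<phi> has_real_derivative \<phi>' t) (at t)" if "0 \<le> t" "t \<le> 1" for t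
    proof -
      have "dist (z + t *\<^sub>R h) z < r"
        using small[OF that] by (simp add: dist_norm d_def)
      from has_real_derivative_along_line[OF r(2)[OF this]]
      show ?thesis
        unfolding \<phi>_def \<phi>'_def by (auto intro!: derivative_eq_intros simp: power2_eq_square algebra_simps)
    qed
    then obtain t where t: "0 < t" "t < 1" "\<phi> 1 - \<phi> 0 = \<phi>' t"
      using MVT2[of 0 1 \<phi> \<phi>'] by auto
    have "\<phi>' t = (g (z + t *\<^sub>R h) - H (t *\<^sub>R h)) \<bullet> h"
      unfolding \<phi>'_def by (simp add: H.scaleR inner_diff_left)
    then have "\<bar>\<phi>' t\<bar> \<le> norm (g (z + t *\<^sub>R h) - H (t *\<^sub>R h)) * norm h"
      by (simp add: Cauchy_Schwarz_ineq2)
    also have "\<dots> \<le> e * norm (t *\<^sub>R h) * norm h"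
      using d1(2)[of "z + t *\<^sub>R h"] small[of t] t by (intro mult_right_mono) (auto simp: d_def)
    also have "\<dots> \<le> e * (norm h)\<^sup>2"
      using t e by (simp add: power2_eq_square mult_left_le_one_le mult.assoc mult_left_mono)
    finally show ?thesis
      using t(3) unfolding \<phi>_def by simp
  qed
  moreover have "0 < d"
    using d1(1) r(1) by (simp add: d_def)
  ultimately show ?thesis
    by blast
qed

lemma second_difference_expansion:
  fixes f :: "'a::real_inner \<Rightarrow> real" and g H :: "'a \<Rightarrow> 'a"
  assumes grad: "\<forall>\<^sub>F w in nhds z. (f has_derivative (\<lambda>h. g w \<bullet> h)) (at w)"
    and hess: "(g has_derivative H) (at z)" and e: "0 < e"
  obtains d where "0 < d" "\<And>a b t. 0 < t \<Longrightarrow> t * (norm a + norm b) < d \<Longrightarrow>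
    \<bar>f (z + t *\<^sub>R a + t *\<^sub>R b) - f (z + t *\<^sub>R a) - f (z + t *\<^sub>R b) + f z - t\<^sup>2 * (H b \<bullet> a)\<bar>
      \<le> 2 * e * t\<^sup>2 * (norm a + norm b)\<^sup>2"
proof -
  interpret H: bounded_linear H
    using hess by (rule has_derivative_bounded_linear)
  obtain r where r: "0 < r" "\<And>w. dist w z < r \<Longrightarrow> (f has_derivative (\<lambda>h. g w \<bullet> h)) (at w)"
    using grad unfolding eventually_nhds_metric by blast
  obtain d1 where d1: "0 < d1"
    "\<And>w. norm (w - z) < d1 \<Longrightarrow> norm (g w - g z - H (w - z)) \<le> e * norm (w - z)"
    using hess[unfolded has_derivative_at_alt] e by blast
  define d where "d = min d1 r"
  have "\<bar>f (z + t *\<^sub>R a + t *\<^sub>R b) - f (z + t *\<^sub>R a) - f (z + t *\<^sub>R b) + f z - t\<^sup>2 * (H b \<bullet> a)\<bar>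
      \<le> 2 * e * t\<^sup>2 * (norm a + norm b)\<^sup>2"
    if t: "0 < t" and small: "t * (norm a + norm b) < d" for a b t
  proof -
    define \<rho> where "\<rho> = t * (norm a + norm b)"
    have near: "norm (t *\<^sub>R b + s *\<^sub>R a) \<le> \<rho>" "norm (s *\<^sub>R a) \<le> \<rho>" if "0 \<le> s" "s \<le> t" for s
    proof -
      have "norm (s *\<^sub>R a) \<le> t * norm a"
        using that by (simp add: mult_right_mono)
      moreover have "norm (t *\<^sub>R b + s *\<^sub>R a) \<le> t * norm b + norm (s *\<^sub>R a)"
        using norm_triangle_ineq[of "t *\<^sub>R b" "s *\<^sub>R a"] t by simp
      ultimately show "norm (t *\<^sub>R b + s *\<^sub>R a) \<le> \<rho>" "norm (s *\<^sub>R a) \<le> \<rho>"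
        unfolding \<rho>_def using t by (simp_all add: distrib_left add_increasing2)
    qed
    define \<psi> where "\<psi> s = f (z + t *\<^sub>R b + s *\<^sub>R a) - f (z + s *\<^sub>R a)" for s
    define \<psi>' where "\<psi>' s = g (z + t *\<^sub>R b + s *\<^sub>R a) \<bullet> a - g (z + s *\<^sub>R a) \<bullet> a" for s
    have "(\<psi> has_real_derivative \<psi>' s) (at s)" if "0 \<le> s" "s \<le> t" for s
    proof -
      have "dist ((z + t *\<^sub>R b) + s *\<^sub>R a) z < r" "dist (z + s *\<^sub>R a) z < r"
        using near[OF that] small unfolding \<rho>_def d_def by (simp_all add: dist_norm add.assoc)
      from DERIV_diff[OF has_real_derivative_along_line has_real_derivative_along_line, OF r(2) r(2), OF this]
      show ?thesis
        unfolding \<psi>_def \<psi>'_def by (simp add: add.assoc)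
    qed
    then obtain s where s: "0 < s" "s < t" "\<psi> t - \<psi> 0 = t * \<psi>' s"
      using MVT2[of 0 t \<psi> \<psi>'] t by auto
    define E1 where "E1 = g (z + t *\<^sub>R b + s *\<^sub>R a) - g z - H (t *\<^sub>R b + s *\<^sub>R a)"
    define E2 where "E2 = g (z + s *\<^sub>R a) - g z - H (s *\<^sub>R a)"
    have "norm E1 \<le> e * \<rho>" "norm E2 \<le> e * \<rho>"
      using d1(2)[of "z + t *\<^sub>R b + s *\<^sub>R a"] d1(2)[of "z + s *\<^sub>R a"] near[of s] s small e
      unfolding E1_def E2_def \<rho>_def d_def
      by (auto simp: add.assoc intro: order.trans mult_left_mono)
    then have E: "norm (E1 - E2) \<le> 2 * e * \<rho>"
      using norm_triangle_ineq4[of E1 E2] by linarith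
    have \<rho>: "0 \<le> \<rho>"
      unfolding \<rho>_def using t by simp
    have \<psi>': "\<psi>' s = t * (H b \<bullet> a) + (E1 - E2) \<bullet> a"
      unfolding \<psi>'_def E1_def E2_def by (simp add: H.add H.scaleR inner_diff_left inner_add_left)
    have "f (z + t *\<^sub>R a + t *\<^sub>R b) - f (z + t *\<^sub>R a) - f (z + t *\<^sub>R b) + f z - t\<^sup>2 * (H b \<bullet> a)
        = t * \<psi>' s - t\<^sup>2 * (H b \<bullet> a)"
      using s(3) unfolding \<psi>_def by (simp add: algebra_simps)
    also have "\<dots> = t * ((E1 - E2) \<bullet> a)"
      unfolding \<psi>' by (simp add: algebra_simps power2_eq_square)
    also have "\<bar>\<dots>\<bar> \<le> t * (norm (E1 - E2) * norm a)"
      using t Cauchy_Schwarz_ineq2[of "E1 - E2" a] by (simp add: abs_mult)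
    also have "\<dots> \<le> t * ((2 * e * \<rho>) * (norm a + norm b))"
      using t E e \<rho> by (intro mult_left_mono mult_mono) auto
    also have "\<dots> = 2 * e * t\<^sup>2 * (norm a + norm b)\<^sup>2"
      unfolding \<rho>_def by (simp add: power2_eq_square algebra_simps)
    finally show ?thesis .
  qed
  moreover have "0 < d"
    using d1(1) r(1) by (simp add: d_def)
  ultimately show ?thesis
    using that by blast
qed

lemma second_derivative_symmetric:
  fixes f :: "'a::real_inner \<Rightarrow> real" and g H :: "'a \<Rightarrow> 'a"
  assumes grad: "\<forall>\<^sub>F w in nhds z. (f has_derivative (\<lambda>h. g w \<bullet> h)) (at w)"
    and hess: "(g has_derivative H) (at z)"
  shows "H u \<bullet> v = H v \<bullet> u"
proof -
  have "\<bar>H v \<bullet> u - H u \<bullet> v\<bar> \<le> e * (4 * (norm u + norm v)\<^sup>2)" if e: "0 < e" for e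
  proof -
    obtain d where d: "0 < d" and approx: "\<And>a b t. 0 < t \<Longrightarrow> t * (norm a + norm b) < d \<Longrightarrow>
      \<bar>f (z + t *\<^sub>R a + t *\<^sub>R b) - f (z + t *\<^sub>R a) - f (z + t *\<^sub>R b) + f z - t\<^sup>2 * (H b \<bullet> a)\<bar>
        \<le> 2 * e * t\<^sup>2 * (norm a + norm b)\<^sup>2"
      using second_difference_expansion[OF grad hess e] by blast
    define t where "t = d / (2 * (norm u + norm v + 1))"
    have t: "0 < t" "t * (norm u + norm v) < d"
      unfolding t_def using scaled_radius_bounds[OF d, of "norm u + norm v"] by auto
    define D where "D = f (z + t *\<^sub>R u + t *\<^sub>R v) - f (z + t *\<^sub>R u) - f (z + t *\<^sub>R v) + f z"
    have "\<bar>D - t\<^sup>2 * (H v \<bullet> u)\<bar> \<le> 2 * e * t\<^sup>2 * (norm u + norm v)\<^sup>2"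
      using approx[OF t] unfolding D_def .
    moreover have "\<bar>D - t\<^sup>2 * (H u \<bullet> v)\<bar> \<le> 2 * e * t\<^sup>2 * (norm u + norm v)\<^sup>2"
      using approx[of t v u] t unfolding D_def by (simp add: add.commute add.left_commute)
    ultimately have "\<bar>t\<^sup>2 * (H v \<bullet> u) - t\<^sup>2 * (H u \<bullet> v)\<bar> \<le> 2 * (2 * e * t\<^sup>2 * (norm u + norm v)\<^sup>2)"
      unfolding abs_le_iff by linarith
    also have "\<bar>t\<^sup>2 * (H v \<bullet> u) - t\<^sup>2 * (H u \<bullet> v)\<bar> = t\<^sup>2 * \<bar>H v \<bullet> u - H u \<bullet> v\<bar>"
      by (simp add: abs_mult flip: right_diff_distrib)
    finally show ?thesis
      using t(1) by (simp add: algebra_simps)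
  qed
  then have "\<bar>H v \<bullet> u - H u \<bullet> v\<bar> \<le> 0"
    by (intro le_0_if_le_epsilon_mult) auto
  then show ?thesis
    by simp
qed

lemma hessian_nonneg_at_minimum:
  fixes f :: "'a::real_inner \<Rightarrow> real" and H :: "'a \<Rightarrow> 'a"
  assumes min: "\<And>w. f z \<le> f w"
    and expansion: "\<And>e. 0 < e \<Longrightarrow> \<exists>d>0. \<forall>h. norm h < d \<longrightarrow> \<bar>f (z + h) - f z - H h \<bullet> h / 2\<bar> \<le> e * (norm h)\<^sup>2"
    and lin: "linear H"
  shows "0 \<le> H h \<bullet> h"
proof -
  interpret H: linear H
    by (rule lin)
  have "- (H h \<bullet> h) \<le> e * (2 * (norm h)\<^sup>2)" if e: "0 < e" for e
  proof -
    obtain d where d: "0 < d" "\<And>k. norm k < d \<Longrightarrow> \<bar>f (z + k) - f z - H k \<bullet> k / 2\<bar> \<le> e * (norm k)\<^sup>2"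
      using expansion[OF e] by blast
    define s where "s = d / (2 * (norm h + 1))"
    have s: "0 < s" "norm (s *\<^sub>R h) < d"
      unfolding s_def using scaled_radius_bounds[OF d(1), of "norm h"] d(1) by auto
    have "\<bar>f (z + s *\<^sub>R h) - f z - s\<^sup>2 * (H h \<bullet> h) / 2\<bar> \<le> e * (s\<^sup>2 * (norm h)\<^sup>2)"
      using d(2)[OF s(2)] s(1) by (simp add: H.scale power2_eq_square algebra_simps)
    then have "s\<^sup>2 * (- (H h \<bullet> h)) \<le> s\<^sup>2 * (e * (2 * (norm h)\<^sup>2))"
      using min[of "z + s *\<^sub>R h"] by (simp add: abs_le_iff algebra_simps)
    then show ?thesis
      by (rule mult_le_cancel_left_pos[THEN iffD1, rotated]) (use s(1) in simp)
  qed
  from le_0_if_le_epsilon_mult[OF this]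
  show ?thesis
    by simp
qed

lemma positive_definite_if_injective:
  fixes H :: "'a::real_inner \<Rightarrow> 'a"
  assumes lin: "linear H" and sym: "\<And>u v. H u \<bullet> v = H v \<bullet> u"
    and nonneg: "\<And>h. 0 \<le> H h \<bullet> h" and inj: "inj H" and h: "h \<noteq> 0"
  shows "0 < H h \<bullet> h"
proof (rule ccontr)
  interpret H: linear H
    by (rule lin)
  assume "\<not> 0 < H h \<bullet> h"
  then have Qh: "H h \<bullet> h = 0"
    using nonneg[of h] by simp
  define w where "w = H h"
  have w: "w \<noteq> 0"
    unfolding w_def using h inj H.zero by (metis injD)
  text \<open>Moving from \<open>h\<close> in the direction \<open>-H h\<close> makes the form negative.\<close>
  define a where "a = w \<bullet> w"
  define b where "b = \<bar>H w \<bullet> w\<bar> + 1"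
  define s where "s = - a / b"
  have a: "0 < a" and b: "0 < b"
    unfolding a_def b_def using w by auto
  have "H (h + s *\<^sub>R w) \<bullet> (h + s *\<^sub>R w) = 2 * s * a + s\<^sup>2 * (H w \<bullet> w)"
    using Qh sym[of w h] unfolding a_def w_def
    by (simp add: H.add H.scale inner_add_left inner_add_right power2_eq_square algebra_simps)
  also have "\<dots> \<le> 2 * s * a + s\<^sup>2 * (b - 1)"
    unfolding b_def by (intro add_left_mono mult_left_mono) auto
  also have "\<dots> = - (a\<^sup>2 * (b + 1)) / b\<^sup>2"
    using b unfolding s_def by (simp add: field_simps power2_eq_square)
  also have "\<dots> < 0"
    using a b by simp
  finally show False
    using nonneg[of "h + s *\<^sub>R w"] by simp
qed

lemma positive_definite_lower_bound:
  fixes H :: "'a::euclidean_space \<Rightarrow> 'a"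
  assumes lin: "bounded_linear H" and pos: "\<And>h. h \<noteq> 0 \<Longrightarrow> 0 < H h \<bullet> h"
  obtains c where "0 < c" "\<And>h. c * (norm h)\<^sup>2 \<le> H h \<bullet> h"
proof -
  interpret H: bounded_linear H
    by (rule lin)
  obtain b :: 'a where "b \<in> Basis"
    using nonempty_Basis by blast
  then have "sphere (0::'a) 1 \<noteq> {}"
    by (auto intro: exI[of _ b])
  moreover have "continuous_on (sphere 0 1) (\<lambda>h. H h \<bullet> h)"
    by (intro continuous_intros H.continuous_on continuous_on_id)
  ultimately obtain h0 where h0: "h0 \<in> sphere 0 1" "\<And>h. h \<in> sphere 0 1 \<Longrightarrow> H h0 \<bullet> h0 \<le> H h \<bullet> h"
    using continuous_attains_inf[OF compact_sphere] by blast
  have "H h0 \<bullet> h0 * (norm h)\<^sup>2 \<le> H h \<bullet> h" for h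
  proof (cases "h = 0")
    case False
    have "H h0 \<bullet> h0 \<le> H (h /\<^sub>R norm h) \<bullet> (h /\<^sub>R norm h)"
      using h0(2)[of "h /\<^sub>R norm h"] False by simp
    also have "\<dots> = H h \<bullet> h / (norm h)\<^sup>2"
      using False by (simp add: H.scaleR power2_eq_square field_simps)
    finally show ?thesis
      using False by (simp add: field_simps)
  qed (simp add: H.zero)
  moreover have "0 < H h0 \<bullet> h0"
    using h0(1) by (intro pos) auto
  ultimately show ?thesis
    using that by blast
qed

lemma quadratic_growth_at_nondegenerate_minimum:
  fixes f :: "'a::euclidean_space \<Rightarrow> real" and g H :: "'a \<Rightarrow> 'a"
  assumes min: "\<And>w. f z \<le> f w"
    and grad: "\<forall>\<^sub>F w in nhds z. (f has_derivative (\<lambda>h. g w \<bullet> h)) (at w)"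
    and hess: "(g has_derivative H) (at z)" and inj: "inj H"
  obtains c r where "0 < c" "0 < r" "\<And>w. norm (w - z) < r \<Longrightarrow> c * (norm (w - z))\<^sup>2 \<le> f w - f z"
proof -
  have lin: "bounded_linear H"
    using hess by (rule has_derivative_bounded_linear)
  have "g z = 0"
  proof -
    have "(f has_derivative (\<lambda>h. g z \<bullet> h)) (at z)"
      using grad by (rule eventually_nhds_x_imp_x)
    from has_derivative_local_min[OF this] min have "(\<lambda>h. g z \<bullet> h) = (\<lambda>h. 0)"
      by simp
    then show ?thesis
      by (metis inner_eq_zero_iff)
  qed
  note expansion = second_order_expansion_at_critical_point[OF grad hess this]
  have nonneg: "0 \<le> H h \<bullet> h" for h
    by (rule hessian_nonneg_at_minimum[OF min expansion bounded_linear.linear[OF lin]])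
  have "0 < H h \<bullet> h" if "h \<noteq> 0" for h
    using positive_definite_if_injective[OF bounded_linear.linear[OF lin]
        second_derivative_symmetric[OF grad hess] nonneg inj that] .
  then obtain c where c: "0 < c" "\<And>h. c * (norm h)\<^sup>2 \<le> H h \<bullet> h"
    using positive_definite_lower_bound[OF lin] by blast
  obtain d where d: "0 < d" "\<And>h. norm h < d \<Longrightarrow> \<bar>f (z + h) - f z - H h \<bullet> h / 2\<bar> \<le> c / 4 * (norm h)\<^sup>2"
    using expansion[of "c / 4"] c(1) by auto
  have "c / 4 * (norm (w - z))\<^sup>2 \<le> f w - f z" if "norm (w - z) < d" for w
  proof -
    have "z + (w - z) = w"
      by simp
    then have "\<bar>f w - f z - H (w - z) \<bullet> (w - z) / 2\<bar> \<le> c / 4 * (norm (w - z))\<^sup>2"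
      using d(2)[OF that] by metis
    then show ?thesis
      using c(2)[of "w - z"] unfolding abs_le_iff by linarith
  qed
  then show ?thesis
    using c(1) d(1) by (intro that[of "c / 4" d]) auto
qed

section \<open>The subspace method\<close>

lemma polyP_carrier: "polyP n Pc d s \<in> carrier_mat n n"
proof -
  have "foldr (\<lambda>j M. (s ^ j) \<cdot>\<^sub>m Pc j + M) js (0\<^sub>m n n) \<in> carrier_mat n n" for js
    by (induction js) auto
  then show ?thesis
    unfolding polyP_def .
qed

lemma Rfun_carrier:
  "C \<in> carrier_mat n k \<Longrightarrow> B \<in> carrier_mat k n \<Longrightarrow> Rfun n Pc d A B C s \<in> carrier_mat n n"
  unfolding Rfun_def by (intro add_carrier_mat carrier_matI) auto

lemma Rred_carrier:
  "C \<in> carrier_mat n k \<Longrightarrow> B \<in> carrier_mat k n \<Longrightarrow> Rred n Pc d A B C V W s \<in> carrier_mat n n"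
  unfolding Rred_def by (intro add_carrier_mat carrier_matI) auto

lemma hcat_dims [simp]:
  "dim_row (hcat X Y) = dim_row X" "dim_col (hcat X Y) = dim_col X + dim_col Y"
  unfolding hcat_def by auto

lemma hcat_index:
  "i < dim_row X \<Longrightarrow> j < dim_col X + dim_col Y \<Longrightarrow>
    hcat X Y $$ (i,j) = (if j < dim_col X then X $$ (i,j) else Y $$ (i, j - dim_col X))"
  unfolding hcat_def by auto

lemma colspace_mem: "v \<in> carrier_vec (dim_col M) \<Longrightarrow> M *\<^sub>v v \<in> colspace M"
  unfolding colspace_def by auto

lemma hcat_mult_right:
  assumes r: "dim_row Y = dim_row X" and y: "y \<in> carrier_vec (dim_col Y)"
  shows "hcat X Y *\<^sub>v vec (dim_col X + dim_col Y) (\<lambda>j. if j < dim_col X then 0 else y $ (j - dim_col X)) = Y *\<^sub>v y"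
    (is "_ *\<^sub>v ?x = _")
proof (rule eq_vecI)
  show "dim_vec (hcat X Y *\<^sub>v ?x) = dim_vec (Y *\<^sub>v y)"
    using r by simp
  fix i
  assume "i < dim_vec (Y *\<^sub>v y)"
  then have i: "i < dim_row X"
    using r by simp
  let ?a = "dim_col X" and ?b = "dim_col Y"
  let ?f = "\<lambda>j. hcat X Y $$ (i,j) * ?x $ j"
  have "(hcat X Y *\<^sub>v ?x) $ i = (\<Sum>j\<in>{0..<?a + ?b}. ?f j)"
    using i by (simp add: mult_mat_vec_def scalar_prod_def)
  also have "\<dots> = (\<Sum>j\<in>{0..<?a}. ?f j) + (\<Sum>j\<in>{?a..<?a + ?b}. ?f j)"
    by (rule sum.atLeastLessThan_concat[symmetric]) auto
  also have "(\<Sum>j\<in>{0..<?a}. ?f j) = 0"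
    by (intro sum.neutral) auto
  also have "(\<Sum>j\<in>{?a..<?a + ?b}. ?f j) = (\<Sum>j\<in>{0 + ?a..<?b + ?a}. ?f j)"
    by (simp add: add.commute)
  also have "\<dots> = (\<Sum>j\<in>{0..<?b}. ?f (j + ?a))"
    by (rule sum.shift_bounds_nat_ivl)
  also have "\<dots> = (\<Sum>j\<in>{0..<?b}. Y $$ (i,j) * y $ j)"
    using i by (intro sum.cong) (auto simp: hcat_index)
  also have "\<dots> = (Y *\<^sub>v y) $ i"
    using i r y by (simp add: mult_mat_vec_def scalar_prod_def)
  finally show "(hcat X Y *\<^sub>v ?x) $ i = (Y *\<^sub>v y) $ i"
    by simp
qed

lemma hcat_mult_left:
  assumes x: "x \<in> carrier_vec (dim_col X)"
  shows "hcat X Y *\<^sub>v vec (dim_col X + dim_col Y) (\<lambda>j. if j < dim_col X then x $ j else 0) = X *\<^sub>v x"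
    (is "_ *\<^sub>v ?x = _")
proof (rule eq_vecI)
  show "dim_vec (hcat X Y *\<^sub>v ?x) = dim_vec (X *\<^sub>v x)"
    by simp
  fix i
  assume "i < dim_vec (X *\<^sub>v x)"
  then have i: "i < dim_row X"
    by simp
  let ?a = "dim_col X" and ?b = "dim_col Y"
  let ?f = "\<lambda>j. hcat X Y $$ (i,j) * ?x $ j"
  have "(hcat X Y *\<^sub>v ?x) $ i = (\<Sum>j\<in>{0..<?a + ?b}. ?f j)"
    using i by (simp add: mult_mat_vec_def scalar_prod_def)
  also have "\<dots> = (\<Sum>j\<in>{0..<?a}. ?f j) + (\<Sum>j\<in>{?a..<?a + ?b}. ?f j)"
    by (rule sum.atLeastLessThan_concat[symmetric]) auto
  also have "(\<Sum>j\<in>{?a..<?a + ?b}. ?f j) = 0"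
    by (intro sum.neutral) auto
  also have "(\<Sum>j\<in>{0..<?a}. ?f j) = (\<Sum>j\<in>{0..<?a}. X $$ (i,j) * x $ j)"
    using i by (intro sum.cong) (auto simp: hcat_index)
  also have "\<dots> = (X *\<^sub>v x) $ i"
    using i x by (simp add: mult_mat_vec_def scalar_prod_def)
  finally show "(hcat X Y *\<^sub>v ?x) $ i = (X *\<^sub>v x) $ i"
    by simp
qed

lemma colspace_hcat_right: "dim_row Y = dim_row X \<Longrightarrow> colspace Y \<subseteq> colspace (hcat X Y)"
  unfolding colspace_def
proof clarify
  fix y :: "complex vec"
  assume r: "dim_row Y = dim_row X" and y: "y \<in> carrier_vec (dim_col Y)"
  show "\<exists>x. Y *\<^sub>v y = hcat X Y *\<^sub>v x \<and> x \<in> carrier_vec (dim_col (hcat X Y))"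
    by (rule exI[of _ "vec (dim_col X + dim_col Y) (\<lambda>j. if j < dim_col X then 0 else y $ (j - dim_col X))"])
       (simp add: hcat_mult_right[OF r y])
qed

lemma colspace_hcat_left: "colspace X \<subseteq> colspace (hcat X Y)"
  unfolding colspace_def
proof clarify
  fix x :: "complex vec"
  assume x: "x \<in> carrier_vec (dim_col X)"
  show "\<exists>z. X *\<^sub>v x = hcat X Y *\<^sub>v z \<and> z \<in> carrier_vec (dim_col (hcat X Y))"
    by (rule exI[of _ "vec (dim_col X + dim_col Y) (\<lambda>j. if j < dim_col X then x $ j else 0)"])
       (simp add: hcat_mult_left[OF x])
qed

lemma colspace_hcat_list_Cons:
  assumes "dim_row G = m"
  shows "colspace G \<subseteq> colspace (hcat_list m (G # Gs))"
proof -
  have "colspace Z \<subseteq> colspace (foldl hcat Z Gs)" for Z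
  proof (induction Gs arbitrary: Z)
    case (Cons G Gs)
    show ?case
      using colspace_hcat_left[of Z G] Cons.IH[of "hcat Z G"] by simp
  qed simp
  moreover have "colspace G \<subseteq> colspace (hcat (0\<^sub>m m 0) G)"
    using assms by (intro colspace_hcat_right) simp
  ultimately show ?thesis
    unfolding hcat_list_def by auto
qed

lemma dim_row_hcat_list [simp]: "dim_row (hcat_list m Gs) = m"
proof -
  have "dim_row (foldl hcat Z Gs) = dim_row Z" for Z
    by (induction Gs arbitrary: Z) auto
  then show ?thesis
    unfolding hcat_list_def by simp
qed

text \<open>Only the first block column of \<^const>\<open>Vtil\<close> and \<^const>\<open>Wtil\<close> enters the error bound.\<close>

lemma colspace_Vtil_first:
  assumes "A \<in> carrier_mat k k" "1 \<le> q" "minv (A - \<mu> \<cdot>\<^sub>m 1\<^sub>m k) \<in> carrier_mat k k"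
  shows "colspace (minv (A - \<mu> \<cdot>\<^sub>m 1\<^sub>m k) * B) \<subseteq> colspace (Vtil A B q \<mu>)"
proof -
  have "[1..<Suc q] = 1 # [Suc 1..<Suc q]"
    using assms(2) by (intro upt_conv_Cons) simp
  then show ?thesis
    unfolding Vtil_def using assms by (simp add: colspace_hcat_list_Cons)
qed

lemma colspace_Wtil_first:
  assumes "A \<in> carrier_mat k k" "1 \<le> q" "minv (mat_adjoint (A - \<mu> \<cdot>\<^sub>m 1\<^sub>m k)) \<in> carrier_mat k k"
  shows "colspace (minv (mat_adjoint (A - \<mu> \<cdot>\<^sub>m 1\<^sub>m k)) * mat_adjoint C) \<subseteq> colspace (Wtil A C q \<mu>)"
proof -
  have "[1..<Suc q] = 1 # [Suc 1..<Suc q]"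
    using assms(2) by (intro upt_conv_Cons) simp
  then show ?thesis
    unfolding Wtil_def using assms by (simp add: colspace_hcat_list_Cons)
qed

lemma subspace_iterates_colspace:
  assumes it: "subspace_iterates n Pc d A B C q \<tau> lam V W l" and A: "A \<in> carrier_mat k k"
  shows "colspace (Vtil A B q (lam l)) \<subseteq> colspace (V l)"
    and "colspace (Wtil A C q (lam l)) \<subseteq> colspace (W l)"
proof -
  have step: "subspace_step n Pc d A B C q \<tau> lam V W m" if "m \<le> l" for m
    using it that unfolding subspace_iterates_def by simp
  have prev: "dim_row (V (l - 1)) = k" "dim_row (W (l - 1)) = k"
    using step[of "l - 1"] A unfolding subspace_step_def by auto
  have "dim_row (Vtil A B q (lam l)) = k" "dim_row (Wtil A C q (lam l)) = k"
    using A unfolding Vtil_def Wtil_def by auto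
  with step[of l] show "colspace (Vtil A B q (lam l)) \<subseteq> colspace (V l)"
    and "colspace (Wtil A C q (lam l)) \<subseteq> colspace (W l)"
    using prev colspace_hcat_right[of "Vtil A B q (lam l)" "V (l - 1)"]
      colspace_hcat_right[of "Wtil A C q (lam l)" "W (l - 1)"]
    unfolding subspace_step_def by (cases "l = 0"; simp)+
qed

section \<open>Interpolation error of the reduced function\<close>

lemma shifted_mult_vec_diff:
  fixes A :: "complex mat"
  assumes A: "A \<in> carrier_mat k k" and x: "x \<in> carrier_vec k"
  shows "(A - \<mu> \<cdot>\<^sub>m 1\<^sub>m k) *\<^sub>v x = (s - \<mu>) \<cdot>\<^sub>v x - (s \<cdot>\<^sub>m 1\<^sub>m k - A) *\<^sub>v x"
proof -
  have "y - \<mu> \<cdot>\<^sub>v x = (s - \<mu>) \<cdot>\<^sub>v x - (s \<cdot>\<^sub>v x - y)" if "y \<in> carrier_vec k" for y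
    using that x by (auto intro!: eq_vecI simp: algebra_simps)
  from this[OF mult_mat_vec_carrier[OF A x]] show ?thesis
    unfolding shifted_mult_vec[OF A x] .
qed

lemma pencil_shift_bounded_below:
  fixes F E :: "complex mat"
  assumes F: "F \<in> carrier_mat p p" and E: "E \<in> carrier_mat p p"
    and E_contr: "\<And>x. x \<in> carrier_vec p \<Longrightarrow> cnorm (E *\<^sub>v x) \<le> cnorm x"
    and low: "bounded_below \<xi> (F - \<mu>\<^sub>0 \<cdot>\<^sub>m E)" and \<mu>: "cmod (\<mu> - \<mu>\<^sub>0) \<le> \<xi> / 2"
  shows "bounded_below (\<xi> / 2) (\<mu> \<cdot>\<^sub>m E - F)" and "bounded_below (\<xi> / 2) (F - \<mu> \<cdot>\<^sub>m E)"
proof -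
  have regroup: "f - \<mu>\<^sub>0 \<cdot>\<^sub>v e = (\<mu> - \<mu>\<^sub>0) \<cdot>\<^sub>v e - (\<mu> \<cdot>\<^sub>v e - f)" "f - \<mu> \<cdot>\<^sub>v e = - (\<mu> \<cdot>\<^sub>v e - f)"
    if "f \<in> carrier_vec p" "e \<in> carrier_vec p" for f e :: "complex vec"
    using that by (auto intro!: eq_vecI simp: algebra_simps)
  have "\<xi> / 2 * cnorm x \<le> cnorm ((\<mu> \<cdot>\<^sub>m E - F) *\<^sub>v x) \<and> \<xi> / 2 * cnorm x \<le> cnorm ((F - \<mu> \<cdot>\<^sub>m E) *\<^sub>v x)"
    if x: "x \<in> carrier_vec p" for x
  proof -
    have Fx: "F *\<^sub>v x \<in> carrier_vec p" and Ex: "E *\<^sub>v x \<in> carrier_vec p"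
      using F E x by auto
    have shifted: "(\<mu> \<cdot>\<^sub>m E - F) *\<^sub>v x = \<mu> \<cdot>\<^sub>v (E *\<^sub>v x) - F *\<^sub>v x"
      by (simp add: minus_mult_distrib_mat_vec[OF smult_carrier_mat[OF E] F x] smult_mat_mult_vec[OF E x])
    have "(F - \<mu>\<^sub>0 \<cdot>\<^sub>m E) *\<^sub>v x = F *\<^sub>v x - \<mu>\<^sub>0 \<cdot>\<^sub>v (E *\<^sub>v x)"
      by (simp add: minus_mult_distrib_mat_vec[OF F smult_carrier_mat[OF E] x] smult_mat_mult_vec[OF E x])
    also have "\<dots> = (\<mu> - \<mu>\<^sub>0) \<cdot>\<^sub>v (E *\<^sub>v x) - (\<mu> \<cdot>\<^sub>v (E *\<^sub>v x) - F *\<^sub>v x)"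
      by (rule regroup(1)[OF Fx Ex])
    also have "\<dots> = (\<mu> - \<mu>\<^sub>0) \<cdot>\<^sub>v (E *\<^sub>v x) - (\<mu> \<cdot>\<^sub>m E - F) *\<^sub>v x"
      by (simp only: shifted)
    finally have "\<xi> * cnorm x \<le> cnorm ((\<mu> - \<mu>\<^sub>0) \<cdot>\<^sub>v (E *\<^sub>v x) - (\<mu> \<cdot>\<^sub>m E - F) *\<^sub>v x)"
      using bounded_belowD[OF minus_carrier_mat[OF smult_carrier_mat[OF E]] low x] by simp
    also have "\<dots> \<le> cmod (\<mu> - \<mu>\<^sub>0) * cnorm (E *\<^sub>v x) + cnorm ((\<mu> \<cdot>\<^sub>m E - F) *\<^sub>v x)"
      using cnorm_triangle_diff[of "(\<mu> - \<mu>\<^sub>0) \<cdot>\<^sub>v (E *\<^sub>v x)" p] Ex F E x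
      by (simp add: cnorm_smult shifted)
    also have "cmod (\<mu> - \<mu>\<^sub>0) * cnorm (E *\<^sub>v x) \<le> \<xi> / 2 * cnorm x"
    proof -
      have "0 \<le> \<xi>"
        using \<mu> norm_ge_zero[of "\<mu> - \<mu>\<^sub>0"] by linarith
      then show ?thesis
        using \<mu> E_contr[OF x] by (intro mult_mono) auto
    qed
    finally have first: "\<xi> / 2 * cnorm x \<le> cnorm ((\<mu> \<cdot>\<^sub>m E - F) *\<^sub>v x)"
      by simp
    have "(F - \<mu> \<cdot>\<^sub>m E) *\<^sub>v x = F *\<^sub>v x - \<mu> \<cdot>\<^sub>v (E *\<^sub>v x)"
      by (simp add: minus_mult_distrib_mat_vec[OF F smult_carrier_mat[OF E] x] smult_mat_mult_vec[OF E x])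
    also have "\<dots> = - (\<mu> \<cdot>\<^sub>v (E *\<^sub>v x) - F *\<^sub>v x)"
      by (rule regroup(2)[OF Fx Ex])
    also have "\<dots> = - ((\<mu> \<cdot>\<^sub>m E - F) *\<^sub>v x)"
      by (simp only: shifted)
    finally have "cnorm ((F - \<mu> \<cdot>\<^sub>m E) *\<^sub>v x) = cnorm ((\<mu> \<cdot>\<^sub>m E - F) *\<^sub>v x)"
      by (simp only: cnorm_uminus)
    with first show ?thesis
      by simp
  qed
  then show "bounded_below (\<xi> / 2) (\<mu> \<cdot>\<^sub>m E - F)" "bounded_below (\<xi> / 2) (F - \<mu> \<cdot>\<^sub>m E)"
    using F E by (auto intro!: bounded_belowI[of _ p p] minus_carrier_mat)
qed

text \<open>\<open>E\<close> is the error of the Petrov-Galerkin approximation \<open>V K\<^sup>-\<^sup>1 W\<^sup>*\<close> of \<open>X = M\<^sup>-\<^sup>1\<close>.\<close>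

lemma oblique_projection_error:
  fixes M X K Ki V W :: "complex mat" and c :: complex
  assumes M: "M \<in> carrier_mat k k" and X: "X \<in> carrier_mat k k" "X * M = 1\<^sub>m k" "M * X = 1\<^sub>m k"
    and V: "V \<in> carrier_mat k p" and W: "W \<in> carrier_mat k p"
    and K: "K = mat_adjoint W * M * V" and Ki: "Ki \<in> carrier_mat p p" "Ki * K = 1\<^sub>m p" "K * Ki = 1\<^sub>m p"
    and g: "g \<in> carrier_vec k"
  defines "E \<equiv> \<lambda>u. X *\<^sub>v u - V *\<^sub>v (Ki *\<^sub>v (mat_adjoint W *\<^sub>v u))"
  shows oblique_projection_error_shift:
      "y \<in> carrier_vec p \<Longrightarrow> V *\<^sub>v y = g \<Longrightarrow> E (c \<cdot>\<^sub>v g - M *\<^sub>v g) = c \<cdot>\<^sub>v E g"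
    and oblique_projection_error_orthogonal: "mat_adjoint W *\<^sub>v (M *\<^sub>v E g) = 0\<^sub>v p"
proof -
  define Wh where "Wh = mat_adjoint W"
  have Wh: "Wh \<in> carrier_mat p k"
    unfolding Wh_def using W by simp
  have KM: "K *\<^sub>v y = Wh *\<^sub>v (M *\<^sub>v (V *\<^sub>v y))" if y: "y \<in> carrier_vec p" for y
  proof -
    have "K *\<^sub>v y = (Wh * M) *\<^sub>v (V *\<^sub>v y)"
      unfolding K Wh_def[symmetric] using Wh M V y by (intro assoc_mult_mat_vec) auto
    also have "\<dots> = Wh *\<^sub>v (M *\<^sub>v (V *\<^sub>v y))"
      using Wh M V y by (intro assoc_mult_mat_vec) auto
    finally show ?thesis .
  qed
  have K_carrier: "K \<in> carrier_mat p p"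
    unfolding K Wh_def[symmetric] using Wh M V by (meson mult_carrier_mat)
  have Mg: "M *\<^sub>v g \<in> carrier_vec k" and Whg: "Wh *\<^sub>v g \<in> carrier_vec p"
    and KiWhg: "Ki *\<^sub>v (Wh *\<^sub>v g) \<in> carrier_vec p" and Xg: "X *\<^sub>v g \<in> carrier_vec k"
    using M Wh Ki X g by auto
  have VKiWhg: "V *\<^sub>v (Ki *\<^sub>v (Wh *\<^sub>v g)) \<in> carrier_vec k"
    using V KiWhg by simp
  have vec_identity: "(c \<cdot>\<^sub>v a - g) - (c \<cdot>\<^sub>v b - g) = c \<cdot>\<^sub>v (a - b)"
    if "a \<in> carrier_vec k" "b \<in> carrier_vec k" for a b
    using that g by (intro eq_vecI) (auto simp: algebra_simps)
  {
    assume y: "y \<in> carrier_vec p" and Vy: "V *\<^sub>v y = g"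
    have X_shift: "X *\<^sub>v (c \<cdot>\<^sub>v g - M *\<^sub>v g) = c \<cdot>\<^sub>v (X *\<^sub>v g) - g"
      using X M g Mg by (simp add: mult_minus_distrib_mat_vec mult_mat_vec mult_mat_vec_inverse)
    have Wh_shift: "Wh *\<^sub>v (c \<cdot>\<^sub>v g - M *\<^sub>v g) = c \<cdot>\<^sub>v (Wh *\<^sub>v g) - K *\<^sub>v y"
      using Wh g Mg KM[OF y] Vy by (simp add: mult_minus_distrib_mat_vec mult_mat_vec Wh_def)
    have Ki_shift: "Ki *\<^sub>v (c \<cdot>\<^sub>v (Wh *\<^sub>v g) - K *\<^sub>v y) = c \<cdot>\<^sub>v (Ki *\<^sub>v (Wh *\<^sub>v g)) - y"
      using Ki K_carrier Whg y by (simp add: mult_minus_distrib_mat_vec mult_mat_vec mult_mat_vec_inverse)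
    have V_shift: "V *\<^sub>v (c \<cdot>\<^sub>v (Ki *\<^sub>v (Wh *\<^sub>v g)) - y) = c \<cdot>\<^sub>v (V *\<^sub>v (Ki *\<^sub>v (Wh *\<^sub>v g))) - g"
      using V KiWhg y Vy by (simp add: mult_minus_distrib_mat_vec mult_mat_vec)
    show "E (c \<cdot>\<^sub>v g - M *\<^sub>v g) = c \<cdot>\<^sub>v E g"
      unfolding E_def Wh_def[symmetric] X_shift Wh_shift Ki_shift V_shift by (rule vec_identity[OF Xg VKiWhg])
  }
  have "M *\<^sub>v E g = g - M *\<^sub>v (V *\<^sub>v (Ki *\<^sub>v (Wh *\<^sub>v g)))"
    unfolding E_def Wh_def[symmetric] using M X g VKiWhg Xg
    by (simp add: mult_minus_distrib_mat_vec mult_mat_vec_inverse)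
  then have "Wh *\<^sub>v (M *\<^sub>v E g) = Wh *\<^sub>v g - K *\<^sub>v (Ki *\<^sub>v (Wh *\<^sub>v g))"
    using Wh M g VKiWhg KM[OF KiWhg] by (simp add: mult_minus_distrib_mat_vec Wh_def)
  also have "\<dots> = 0\<^sub>v p"
    using K_carrier Ki Whg by (simp add: mult_mat_vec_inverse)
  finally show "mat_adjoint W *\<^sub>v (M *\<^sub>v E g) = 0\<^sub>v p"
    unfolding Wh_def .
qed

lemma oblique_projection_error_bound:
  fixes M K V W :: "complex mat"
  assumes V: "V \<in> carrier_mat k p" and W: "W \<in> carrier_mat k p"
    and oV: "orthonormal_cols V" and oW: "orthonormal_cols W"
    and M: "M \<in> carrier_mat k k" and K: "K \<in> carrier_mat p p" and a: "0 < a"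
    and M_below: "bounded_below a M" and K_below: "bounded_below a K"
    and g: "g \<in> carrier_vec k"
  shows "a * cnorm (minv M *\<^sub>v g - V *\<^sub>v (minv K *\<^sub>v (mat_adjoint W *\<^sub>v g))) \<le> 2 * cnorm g"
proof -
  note X = minv_if_bounded_below[OF M a M_below] and Ki = minv_if_bounded_below[OF K a K_below]
  have Whg: "mat_adjoint W *\<^sub>v g \<in> carrier_vec p"
    using W g by (metis mat_adjoint_carrier mult_mat_vec_carrier)
  then have KiWhg: "minv K *\<^sub>v (mat_adjoint W *\<^sub>v g) \<in> carrier_vec p"
    using Ki(1) by simp
  have "cnorm (minv M *\<^sub>v g - V *\<^sub>v (minv K *\<^sub>v (mat_adjoint W *\<^sub>v g)))
      \<le> cnorm (minv M *\<^sub>v g) + cnorm (minv K *\<^sub>v (mat_adjoint W *\<^sub>v g))"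
    using cnorm_triangle_diff[of "minv M *\<^sub>v g" k "V *\<^sub>v (minv K *\<^sub>v (mat_adjoint W *\<^sub>v g))"]
      mult_mat_vec_carrier[OF X(1) g] mult_mat_vec_carrier[OF V KiWhg] cnorm_orthonormal_cols[OF V oV KiWhg]
    by simp
  moreover have "cnorm (minv K *\<^sub>v (mat_adjoint W *\<^sub>v g)) \<le> cnorm g / a"
    using Ki(4)[OF Whg] divide_right_mono[OF cnorm_adjoint_orthonormal_cols_le[OF W oW g], of a] a
    by simp
  moreover have "cnorm (minv M *\<^sub>v g) \<le> cnorm g / a"
    by (rule X(4)[OF g])
  ultimately have "cnorm (minv M *\<^sub>v g - V *\<^sub>v (minv K *\<^sub>v (mat_adjoint W *\<^sub>v g))) \<le> cnorm g / a + cnorm g / a"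
    by linarith
  then show ?thesis
    using a by (simp add: field_simps)
qed

text \<open>With \<open>u = C z\<close> and \<open>W t = N\<^sup>-\<^sup>* C\<^sup>* u\<close>:
  \<open>|u|\<^sup>2 = \<langle>z, C\<^sup>* u\<rangle> = \<langle>N z, W t\<rangle> = \<langle>W\<^sup>* N z, t\<rangle> = c \<langle>W\<^sup>* z, t\<rangle>\<close>.\<close>

lemma left_interpolation_bound:
  fixes N C W :: "complex mat"
  assumes N: "N \<in> carrier_mat k k" and C: "C \<in> carrier_mat n k"
    and W: "W \<in> carrier_mat k p" and oW: "orthonormal_cols W" and a: "0 < a"
    and low: "bounded_below a N"
    and colW: "colspace (minv (mat_adjoint N) * mat_adjoint C) \<subseteq> colspace W"
    and z: "z \<in> carrier_vec k"
    and Nz: "mat_adjoint W *\<^sub>v (N *\<^sub>v z) = c \<cdot>\<^sub>v (mat_adjoint W *\<^sub>v z)"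
  shows "a * cnorm (C *\<^sub>v z) \<le> cmod c * frob_norm (mat_adjoint C) * cnorm z"
proof -
  define u where "u = C *\<^sub>v z"
  define Nh where "Nh = mat_adjoint N"
  have Nh: "Nh \<in> carrier_mat k k"
    unfolding Nh_def using N by simp
  note Nhi = minv_if_bounded_below[OF Nh a adjoint_bounded_below[OF N a low, folded Nh_def]]
  have u: "u \<in> carrier_vec n" and Chu: "mat_adjoint C *\<^sub>v u \<in> carrier_vec k"
    unfolding u_def using C z by (auto intro: mult_mat_vec_carrier[OF mat_adjoint_carrier[OF C]])
  define w where "w = minv Nh *\<^sub>v (mat_adjoint C *\<^sub>v u)"
  have w: "w \<in> carrier_vec k"
    unfolding w_def using Nhi(1) Chu by simp
  have "(minv Nh * mat_adjoint C) *\<^sub>v u = w"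
    unfolding w_def using Nhi(1) mat_adjoint_carrier[OF C] u by simp
  moreover have "u \<in> carrier_vec (dim_col (minv Nh * mat_adjoint C))"
    using C u by (simp add: carrier_matD)
  ultimately have "w \<in> colspace (minv Nh * mat_adjoint C)"
    by (metis colspace_mem)
  then obtain t where t: "t \<in> carrier_vec p" "W *\<^sub>v t = w"
    using colW W unfolding Nh_def colspace_def by auto
  have Nhw: "Nh *\<^sub>v w = mat_adjoint C *\<^sub>v u"
    unfolding w_def using Nhi Nh Chu by (simp add: mult_mat_vec_inverse)
  have Whz: "mat_adjoint W *\<^sub>v z \<in> carrier_vec p" and Nz_carrier: "N *\<^sub>v z \<in> carrier_vec k"
    using W N z by (auto intro: mult_mat_vec_carrier[OF mat_adjoint_carrier[OF W]])
  have t_bound: "a * cnorm t \<le> frob_norm (mat_adjoint C) * cnorm u"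
  proof -
    have "cnorm t = cnorm w"
      using cnorm_orthonormal_cols[OF W oW t(1)] t(2) by simp
    also have "\<dots> \<le> cnorm (mat_adjoint C *\<^sub>v u) / a"
      unfolding w_def by (rule Nhi(4)[OF Chu])
    finally have "a * cnorm t \<le> cnorm (mat_adjoint C *\<^sub>v u)"
      using a by (simp add: field_simps)
    also have "\<dots> \<le> frob_norm (mat_adjoint C) * cnorm u"
      by (rule cnorm_mult_mat_vec_le[OF mat_adjoint_carrier[OF C] u])
    finally show ?thesis .
  qed
  have "(cnorm u)\<^sup>2 = cmod (cinner z (Nh *\<^sub>v w))"
    unfolding Nhw cnorm_power2_eq_cmod_cinner using cinner_mult_adjoint[OF C z u] u_def by simp
  also have "\<dots> = cmod (cinner (W *\<^sub>v t) (N *\<^sub>v z))"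
    unfolding Nh_def t(2) using cinner_mult_adjoint[OF N z w] cinner_commute[of "N *\<^sub>v z" w] N w
    by (simp add: carrier_vecD)
  also have "\<dots> = cmod c * cmod (cinner t (mat_adjoint W *\<^sub>v z))"
    unfolding cinner_mult_adjoint[OF W t(1) Nz_carrier] Nz cinner_smult_right[OF t(1) Whz] by (simp add: norm_mult)
  also have "\<dots> \<le> cmod c * (cnorm t * cnorm z)"
  proof -
    have "cmod (cinner t (mat_adjoint W *\<^sub>v z)) \<le> cnorm t * cnorm (mat_adjoint W *\<^sub>v z)"
      using t(1) Whz by (intro cinner_Cauchy_Schwarz) (simp add: carrier_vecD carrier_matD[OF W])
    also have "\<dots> \<le> cnorm t * cnorm z"
      using cnorm_adjoint_orthonormal_cols_le[OF W oW z] by (intro mult_left_mono) auto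
    finally show ?thesis
      by (intro mult_left_mono) auto
  qed
  finally have "a * (cnorm u)\<^sup>2 \<le> cmod c * ((a * cnorm t) * cnorm z)"
    using a by (simp add: mult_left_mono algebra_simps)
  also have "\<dots> \<le> cmod c * ((frob_norm (mat_adjoint C) * cnorm u) * cnorm z)"
    using t_bound by (intro mult_left_mono mult_right_mono) auto
  finally have "cnorm u * (a * cnorm u) \<le> cnorm u * (cmod c * frob_norm (mat_adjoint C) * cnorm z)"
    by (simp add: power2_eq_square algebra_simps)
  then show ?thesis
    unfolding u_def[symmetric] using cnorm_nonneg[of u] a
    by (cases "cnorm u = 0") (simp_all add: mult_le_cancel_left)
qed

lemma Rfun_minus_Rred_mult_vec:
  fixes A B C V W :: "complex mat"
  assumes A: "A \<in> carrier_mat k k" and B: "B \<in> carrier_mat k n" and C: "C \<in> carrier_mat n k"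
    and V: "V \<in> carrier_mat k p" and W: "W \<in> carrier_mat k p"
    and X: "minv (s \<cdot>\<^sub>m 1\<^sub>m k - A) \<in> carrier_mat k k"
    and Ki: "minv (s \<cdot>\<^sub>m (mat_adjoint W * V) - mat_adjoint W * A * V) \<in> carrier_mat p p"
    and v: "v \<in> carrier_vec n"
  shows "(Rfun n Pc d A B C s - Rred n Pc d A B C V W s) *\<^sub>v v
    = C *\<^sub>v (minv (s \<cdot>\<^sub>m 1\<^sub>m k - A) *\<^sub>v (B *\<^sub>v v)
        - V *\<^sub>v (minv (s \<cdot>\<^sub>m (mat_adjoint W * V) - mat_adjoint W * A * V) *\<^sub>v (mat_adjoint W *\<^sub>v (B *\<^sub>v v))))"
proof -
  define P where "P = polyP n Pc d s"
  define Xs where "Xs = minv (s \<cdot>\<^sub>m 1\<^sub>m k - A)"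
  define Ks where "Ks = minv (s \<cdot>\<^sub>m (mat_adjoint W * V) - mat_adjoint W * A * V)"
  define Wh where "Wh = mat_adjoint W"
  define b where "b = B *\<^sub>v v"
  have P: "P \<in> carrier_mat n n"
    unfolding P_def by (rule polyP_carrier)
  have Xs: "Xs \<in> carrier_mat k k" and Ks: "Ks \<in> carrier_mat p p" and Wh: "Wh \<in> carrier_mat p k"
    unfolding Xs_def Ks_def Wh_def using X Ki W by auto
  have b: "b \<in> carrier_vec k" and Xb: "Xs *\<^sub>v b \<in> carrier_vec k"
    and VKWb: "V *\<^sub>v (Ks *\<^sub>v (Wh *\<^sub>v b)) \<in> carrier_vec k"
    unfolding b_def using B v Xs V Ks Wh by auto
  have Y1: "C * Xs * B \<in> carrier_mat n n" and Y2: "C * V * Ks * Wh * B \<in> carrier_mat n n"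
    using C Xs V Ks Wh B by (meson mult_carrier_mat)+
  have "Rfun n Pc d A B C s *\<^sub>v v = (P + C * Xs * B) *\<^sub>v v"
    unfolding Rfun_def P_def Xs_def using A by simp
  also have "\<dots> = P *\<^sub>v v + (C * Xs) *\<^sub>v b"
    unfolding add_mult_distrib_mat_vec[OF P Y1 v] b_def using C Xs B v by (subst assoc_mult_mat_vec) auto
  also have "(C * Xs) *\<^sub>v b = C *\<^sub>v (Xs *\<^sub>v b)"
    using C Xs b by (intro assoc_mult_mat_vec) auto
  finally have Rfun_v: "Rfun n Pc d A B C s *\<^sub>v v = P *\<^sub>v v + C *\<^sub>v (Xs *\<^sub>v b)" .
  have "Rred n Pc d A B C V W s *\<^sub>v v = (P + C * V * Ks * Wh * B) *\<^sub>v v"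
    unfolding Rred_def P_def Ks_def Wh_def ..
  also have "\<dots> = P *\<^sub>v v + (C * V * Ks * Wh) *\<^sub>v b"
    unfolding add_mult_distrib_mat_vec[OF P Y2 v] b_def using C V Ks Wh B v
    by (subst assoc_mult_mat_vec) (auto intro: mult_carrier_mat)
  also have "(C * V * Ks * Wh) *\<^sub>v b = (C * V * Ks) *\<^sub>v (Wh *\<^sub>v b)"
    using C V Ks Wh b by (intro assoc_mult_mat_vec) (auto intro: mult_carrier_mat)
  also have "\<dots> = (C * V) *\<^sub>v (Ks *\<^sub>v (Wh *\<^sub>v b))"
    using C V Ks Wh b by (intro assoc_mult_mat_vec) (auto intro: mult_carrier_mat)
  also have "\<dots> = C *\<^sub>v (V *\<^sub>v (Ks *\<^sub>v (Wh *\<^sub>v b)))"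
    using C V Ks Wh b by (intro assoc_mult_mat_vec) (auto intro: mult_carrier_mat)
  finally have Rred_v: "Rred n Pc d A B C V W s *\<^sub>v v = P *\<^sub>v v + C *\<^sub>v (V *\<^sub>v (Ks *\<^sub>v (Wh *\<^sub>v b)))" .
  have cancel: "(u + x) - (u + y) = x - y" if "u \<in> carrier_vec n" "x \<in> carrier_vec n" "y \<in> carrier_vec n"
    for u x y :: "complex vec"
    using that by (auto intro!: eq_vecI)
  have "(Rfun n Pc d A B C s - Rred n Pc d A B C V W s) *\<^sub>v v
      = Rfun n Pc d A B C s *\<^sub>v v - Rred n Pc d A B C V W s *\<^sub>v v"
    by (rule minus_mult_distrib_mat_vec[OF Rfun_carrier[OF C B] Rred_carrier[OF C B] v])
  also have "\<dots> = C *\<^sub>v (Xs *\<^sub>v b) - C *\<^sub>v (V *\<^sub>v (Ks *\<^sub>v (Wh *\<^sub>v b)))"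
    unfolding Rfun_v Rred_v using P v C Xb VKWb by (intro cancel) auto
  also have "\<dots> = C *\<^sub>v (Xs *\<^sub>v b - V *\<^sub>v (Ks *\<^sub>v (Wh *\<^sub>v b)))"
    by (rule mult_minus_distrib_mat_vec[OF C Xb VKWb, symmetric])
  finally show ?thesis
    unfolding Xs_def Ks_def Wh_def b_def .
qed

lemma adjoint_mult_shift_mult:
  fixes A V W :: "complex mat"
  assumes A: "A \<in> carrier_mat k k" and V: "V \<in> carrier_mat k p" and W: "W \<in> carrier_mat k p"
  shows "mat_adjoint W * (s \<cdot>\<^sub>m 1\<^sub>m k - A) * V = s \<cdot>\<^sub>m (mat_adjoint W * V) - mat_adjoint W * A * V"
proof -
  have Wh: "mat_adjoint W \<in> carrier_mat p k"
    using W by simp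
  have "mat_adjoint W * (s \<cdot>\<^sub>m 1\<^sub>m k - A) = s \<cdot>\<^sub>m mat_adjoint W - mat_adjoint W * A"
    using mult_minus_distrib_mat[OF Wh smult_carrier_mat[OF one_carrier_mat] A] Wh
    by (simp add: mult_smult_distrib[OF Wh one_carrier_mat] right_mult_one_mat[OF Wh])
  then show ?thesis
    using minus_mult_distrib_mat[OF smult_carrier_mat[OF Wh] mult_carrier_mat[OF Wh A] V]
    by (simp add: mult_smult_assoc_mat[OF Wh V])
qed

lemma reduced_function_interpolation_error:
  fixes A B C V W :: "complex mat" and s \<mu> :: complex and a :: real
  assumes A: "A \<in> carrier_mat k k" and B: "B \<in> carrier_mat k n" and C: "C \<in> carrier_mat n k"
    and V: "V \<in> carrier_mat k p" and W: "W \<in> carrier_mat k p"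
    and oV: "orthonormal_cols V" and oW: "orthonormal_cols W" and a: "0 < a"
    and M_below: "bounded_below a (s \<cdot>\<^sub>m 1\<^sub>m k - A)" and N_below: "bounded_below a (A - \<mu> \<cdot>\<^sub>m 1\<^sub>m k)"
    and K_below: "bounded_below a (s \<cdot>\<^sub>m (mat_adjoint W * V) - mat_adjoint W * A * V)"
    and colV: "colspace (minv (A - \<mu> \<cdot>\<^sub>m 1\<^sub>m k) * B) \<subseteq> colspace V"
    and colW: "colspace (minv (mat_adjoint (A - \<mu> \<cdot>\<^sub>m 1\<^sub>m k)) * mat_adjoint C) \<subseteq> colspace W"
    and v: "v \<in> carrier_vec n"
  shows "a ^ 3 * cnorm ((Rfun n Pc d A B C s - Rred n Pc d A B C V W s) *\<^sub>v v)
    \<le> 2 * frob_norm (mat_adjoint C) * frob_norm B * (cmod (s - \<mu>))\<^sup>2 * cnorm v"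
proof -
  define M where "M = s \<cdot>\<^sub>m 1\<^sub>m k - A"
  define N where "N = A - \<mu> \<cdot>\<^sub>m 1\<^sub>m k"
  define Wh where "Wh = mat_adjoint W"
  define K where "K = Wh * M * V"
  have M: "M \<in> carrier_mat k k" and N: "N \<in> carrier_mat k k" and Wh: "Wh \<in> carrier_mat p k"
    and K: "K \<in> carrier_mat p p"
    unfolding M_def N_def Wh_def K_def using A V W by (auto intro!: minus_carrier_mat mult_carrier_mat)
  have K_eq: "K = s \<cdot>\<^sub>m (Wh * V) - Wh * A * V"
    unfolding K_def M_def Wh_def by (rule adjoint_mult_shift_mult[OF A V W])
  note X = minv_if_bounded_below[OF M a M_below[folded M_def]]
  note Ni = minv_if_bounded_below[OF N a N_below[folded N_def]]
  note Ki = minv_if_bounded_below[OF K a K_below[folded Wh_def, folded K_eq]]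
  define E where "E u = minv M *\<^sub>v u - V *\<^sub>v (minv K *\<^sub>v (Wh *\<^sub>v u))" for u
  define b where "b = B *\<^sub>v v"
  define g where "g = minv N *\<^sub>v b"
  have b: "b \<in> carrier_vec k" and g: "g \<in> carrier_vec k"
    unfolding b_def g_def using B v Ni(1) by auto
  have "(minv N * B) *\<^sub>v v = g" and "v \<in> carrier_vec (dim_col (minv N * B))"
    unfolding g_def b_def using Ni(1) B v by (auto simp: carrier_matD)
  then have "g \<in> colspace V"
    using colV colspace_mem unfolding N_def by blast
  then obtain y where y: "y \<in> carrier_vec p" "V *\<^sub>v y = g"
    using V unfolding colspace_def by auto
  have Nx: "N *\<^sub>v x = (s - \<mu>) \<cdot>\<^sub>v x - M *\<^sub>v x" if "x \<in> carrier_vec k" for x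
    unfolding N_def M_def by (rule shifted_mult_vec_diff[OF A that])
  note oblique = oblique_projection_error[OF M X(1,3,2) V W K_def[unfolded Wh_def] Ki(1,3,2) g,
      folded Wh_def E_def]
  have "N *\<^sub>v g = b"
    unfolding g_def by (rule mult_mat_vec_inverse[OF N Ni(1,2) b])
  then have b_eq: "b = (s - \<mu>) \<cdot>\<^sub>v g - M *\<^sub>v g"
    using Nx[OF g] by simp
  have Eb: "E b = (s - \<mu>) \<cdot>\<^sub>v E g"
    unfolding E_def by (simp only: b_eq oblique(1)[OF y])
  have Eg: "E g \<in> carrier_vec k"
    unfolding E_def using X(1) V Ki(1) Wh g by auto
  have "Wh *\<^sub>v (N *\<^sub>v E g) = (s - \<mu>) \<cdot>\<^sub>v (Wh *\<^sub>v E g)"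
  proof -
    have "Wh *\<^sub>v (M *\<^sub>v E g) = 0\<^sub>v p"
      unfolding E_def by (rule oblique(2))
    then show ?thesis
      unfolding Nx[OF Eg] using Wh Eg M by (simp add: mult_minus_distrib_mat_vec mult_mat_vec)
  qed
  from left_interpolation_bound[OF N C W oW a N_below[folded N_def] colW[folded N_def] Eg this[unfolded Wh_def]]
  have left: "a * cnorm (C *\<^sub>v E g) \<le> cmod (s - \<mu>) * frob_norm (mat_adjoint C) * cnorm (E g)" .
  have Eg_bound: "a * cnorm (E g) \<le> 2 * cnorm g"
    using oblique_projection_error_bound[OF V W oV oW M K a M_below[folded M_def]
        K_below[folded Wh_def, folded K_eq] g]
    unfolding E_def Wh_def .
  have g_bound: "a * cnorm g \<le> frob_norm B * cnorm v"
    using Ni(4)[OF b] cnorm_mult_mat_vec_le[OF B v] a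
    unfolding g_def b_def by (simp add: field_simps)
  have "(Rfun n Pc d A B C s - Rred n Pc d A B C V W s) *\<^sub>v v = C *\<^sub>v E b"
    unfolding E_def b_def K_eq M_def Wh_def
    by (rule Rfun_minus_Rred_mult_vec[OF A B C V W X(1)[unfolded M_def] Ki(1)[unfolded K_eq Wh_def] v])
  then have diff: "(Rfun n Pc d A B C s - Rred n Pc d A B C V W s) *\<^sub>v v = (s - \<mu>) \<cdot>\<^sub>v (C *\<^sub>v E g)"
    unfolding Eb using C Eg by (simp add: mult_mat_vec)
  have "a ^ 3 * cnorm ((Rfun n Pc d A B C s - Rred n Pc d A B C V W s) *\<^sub>v v)
      = a\<^sup>2 * cmod (s - \<mu>) * (a * cnorm (C *\<^sub>v E g))"
    unfolding diff cnorm_smult by (simp add: power2_eq_square power3_eq_cube)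
  also have "\<dots> \<le> a\<^sup>2 * cmod (s - \<mu>) * (cmod (s - \<mu>) * frob_norm (mat_adjoint C) * cnorm (E g))"
    using left a by (intro mult_left_mono) auto
  also have "\<dots> = a * (cmod (s - \<mu>))\<^sup>2 * frob_norm (mat_adjoint C) * (a * cnorm (E g))"
    by (simp add: power2_eq_square algebra_simps)
  also have "\<dots> \<le> a * (cmod (s - \<mu>))\<^sup>2 * frob_norm (mat_adjoint C) * (2 * cnorm g)"
    using Eg_bound a by (intro mult_left_mono) auto
  also have "\<dots> = 2 * (cmod (s - \<mu>))\<^sup>2 * frob_norm (mat_adjoint C) * (a * cnorm g)"
    by (simp add: algebra_simps)
  also have "\<dots> \<le> 2 * (cmod (s - \<mu>))\<^sup>2 * frob_norm (mat_adjoint C) * (frob_norm B * cnorm v)"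
    using g_bound by (intro mult_left_mono) auto
  finally show ?thesis
    by (simp add: algebra_simps)
qed

lemma Rfun_small_at_reduced_eigenvalue:
  fixes A B C V W :: "complex mat" and s \<mu> \<theta> :: complex and \<xi> :: real
  assumes A: "A \<in> carrier_mat k k" and B: "B \<in> carrier_mat k n" and C: "C \<in> carrier_mat n k"
    and rV: "dim_row V = k" and rW: "dim_row W = k"
    and oV: "orthonormal_cols V" and oW: "orthonormal_cols W" and \<xi>: "0 < \<xi>"
    and sig: "\<xi> \<le> sigma_min (A - \<theta> \<cdot>\<^sub>m 1\<^sub>m k)"
    and sig_red: "\<xi> \<le> sigma_min (mat_adjoint W * A * V - \<theta> \<cdot>\<^sub>m (mat_adjoint W * V))"
    and q: "1 \<le> q"
    and colV: "colspace (Vtil A B q \<mu>) \<subseteq> colspace V" and colW: "colspace (Wtil A C q \<mu>) \<subseteq> colspace W"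
    and s: "cmod (s - \<theta>) \<le> \<xi> / 2" and \<mu>: "cmod (\<mu> - \<theta>) \<le> \<xi> / 2"
    and eig: "red_eigenvalue n Pc d A B C V W s"
  obtains v where "v \<in> carrier_vec n" "cnorm v = 1"
    "cnorm (Rfun n Pc d A B C s *\<^sub>v v) \<le> 16 * frob_norm (mat_adjoint C) * frob_norm B / \<xi> ^ 3 * (cmod (s - \<mu>))\<^sup>2"
proof -
  define p where "p = dim_col V"
  have "dim_col W = p"
    using eig unfolding red_eigenvalue_def invertible_mat_def p_def by simp
  then have V: "V \<in> carrier_mat k p" and W: "W \<in> carrier_mat k p"
    using rV rW unfolding p_def by auto
  define Wh where "Wh = mat_adjoint W"
  have Wh: "Wh \<in> carrier_mat p k"
    unfolding Wh_def using W by simp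
  have WhV: "Wh * V \<in> carrier_mat p p" and WhAV: "Wh * A * V \<in> carrier_mat p p"
    using Wh A V by (meson mult_carrier_mat)+
  have Wh_contr: "cnorm ((Wh * V) *\<^sub>v x) \<le> cnorm x" if x: "x \<in> carrier_vec p" for x
    using cnorm_adjoint_orthonormal_cols_le[OF W oW mult_mat_vec_carrier[OF V x]]
      cnorm_orthonormal_cols[OF V oV x] Wh V x unfolding Wh_def by simp
  have "A - \<theta> \<cdot>\<^sub>m 1\<^sub>m k \<in> carrier_mat k k" and "Wh * A * V - \<theta> \<cdot>\<^sub>m (Wh * V) \<in> carrier_mat p p"
    using WhV by (auto intro!: minus_carrier_mat)
  from sigma_min_bounded_below[OF this(1) sig] sigma_min_bounded_below[OF this(2) sig_red[folded Wh_def]]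
  have low: "bounded_below \<xi> (A - \<theta> \<cdot>\<^sub>m 1\<^sub>m k)" and low_red: "bounded_below \<xi> (Wh * A * V - \<theta> \<cdot>\<^sub>m (Wh * V))" .
  have \<xi>2: "0 < \<xi> / 2"
    using \<xi> by simp
  have N: "A - \<mu> \<cdot>\<^sub>m 1\<^sub>m k \<in> carrier_mat k k"
    by (rule minus_carrier_mat) simp
  have M_below: "bounded_below (\<xi> / 2) (s \<cdot>\<^sub>m 1\<^sub>m k - A)"
    by (rule pencil_shift_bounded_below(1)[OF A one_carrier_mat _ low s]) simp
  have N_below: "bounded_below (\<xi> / 2) (A - \<mu> \<cdot>\<^sub>m 1\<^sub>m k)"
    by (rule pencil_shift_bounded_below(2)[OF A one_carrier_mat _ low \<mu>]) simp
  have K_below: "bounded_below (\<xi> / 2) (s \<cdot>\<^sub>m (Wh * V) - Wh * A * V)"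
    by (rule pencil_shift_bounded_below(1)[OF WhAV WhV _ low_red s]) (use Wh_contr in blast)
  have colV': "colspace (minv (A - \<mu> \<cdot>\<^sub>m 1\<^sub>m k) * B) \<subseteq> colspace V"
    using colspace_Vtil_first[OF A q minv_if_bounded_below(1)[OF N \<xi>2 N_below]] colV by blast
  have colW': "colspace (minv (mat_adjoint (A - \<mu> \<cdot>\<^sub>m 1\<^sub>m k)) * mat_adjoint C) \<subseteq> colspace W"
    using colspace_Wtil_first[OF A q minv_if_bounded_below(1)[OF _ \<xi>2 adjoint_bounded_below[OF N \<xi>2 N_below]]]
      colW N by auto
  obtain v where v: "v \<in> carrier_vec n" "cnorm v = 1" and "Rred n Pc d A B C V W s *\<^sub>v v = 0\<^sub>v n"
    using unit_null_vector[OF Rred_carrier[OF C B]] eig unfolding red_eigenvalue_def by blast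
  then have "(Rfun n Pc d A B C s - Rred n Pc d A B C V W s) *\<^sub>v v = Rfun n Pc d A B C s *\<^sub>v v"
    using minus_mult_distrib_mat_vec[OF Rfun_carrier[OF C B] Rred_carrier[OF C B] v(1)]
      mult_mat_vec_carrier[OF Rfun_carrier[OF C B] v(1)] by simp
  moreover have "(\<xi> / 2) ^ 3 * cnorm ((Rfun n Pc d A B C s - Rred n Pc d A B C V W s) *\<^sub>v v)
      \<le> 2 * frob_norm (mat_adjoint C) * frob_norm B * (cmod (s - \<mu>))\<^sup>2 * cnorm v"
    by (rule reduced_function_interpolation_error[OF A B C V W oV oW \<xi>2 M_below N_below
        K_below[unfolded Wh_def] colV' colW' v(1)])
  ultimately have "(\<xi> / 2) ^ 3 * cnorm (Rfun n Pc d A B C s *\<^sub>v v)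
      \<le> 2 * frob_norm (mat_adjoint C) * frob_norm B * (cmod (s - \<mu>))\<^sup>2"
    using v(2) by simp
  then have "cnorm (Rfun n Pc d A B C s *\<^sub>v v)
      \<le> 2 * frob_norm (mat_adjoint C) * frob_norm B * (cmod (s - \<mu>))\<^sup>2 / (\<xi> / 2) ^ 3"
    using \<xi> by (simp add: pos_le_divide_eq mult.commute)
  also have "\<dots> = 16 * frob_norm (mat_adjoint C) * frob_norm B / \<xi> ^ 3 * (cmod (s - \<mu>))\<^sup>2"
    using \<xi> by (simp add: field_simps power_divide)
  finally show ?thesis
    using that v by blast
qed

lemma quadratic_convergence_step:
  fixes c K :: real and \<zeta> \<zeta>' \<zeta>\<^sub>0 :: complex
  assumes c: "0 < c" and K: "0 \<le> K"
    and residual: "c * (cmod (\<zeta>' - \<zeta>\<^sub>0))\<^sup>2 \<le> (K * (cmod (\<zeta>' - \<zeta>))\<^sup>2)\<^sup>2"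
    and close: "cmod (\<zeta>' - \<zeta>\<^sub>0) \<le> sqrt c / (4 * K + 1)"
  shows "cmod (\<zeta>' - \<zeta>\<^sub>0) \<le> (4 * K / sqrt c + 1) * (cmod (\<zeta> - \<zeta>\<^sub>0))\<^sup>2"
proof -
  define e where "e = cmod (\<zeta> - \<zeta>\<^sub>0)"
  define e' where "e' = cmod (\<zeta>' - \<zeta>\<^sub>0)"
  define sc where "sc = sqrt c"
  have sc: "0 < sc"
    unfolding sc_def using c by simp
  have "sc * e' \<le> K * (cmod (\<zeta>' - \<zeta>))\<^sup>2"
    using real_sqrt_le_mono[OF residual] K unfolding sc_def e'_def by (simp add: real_sqrt_mult)
  moreover have "(cmod (\<zeta>' - \<zeta>))\<^sup>2 \<le> 2 * e'\<^sup>2 + 2 * e\<^sup>2"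
  proof -
    have "cmod (\<zeta>' - \<zeta>) \<le> e' + e"
      unfolding e_def e'_def using norm_triangle_ineq4[of "\<zeta>' - \<zeta>\<^sub>0" "\<zeta> - \<zeta>\<^sub>0"] by simp
    then have "(cmod (\<zeta>' - \<zeta>))\<^sup>2 \<le> (e' + e)\<^sup>2"
      by (rule power_mono) simp
    also have "\<dots> \<le> 2 * e'\<^sup>2 + 2 * e\<^sup>2"
      using zero_le_power2[of "e' - e"] unfolding power2_sum power2_diff by linarith
    finally show ?thesis .
  qed
  then have "K * (cmod (\<zeta>' - \<zeta>))\<^sup>2 \<le> K * (2 * e'\<^sup>2 + 2 * e\<^sup>2)"
    using K by (rule mult_left_mono)
  ultimately have "sc * e' \<le> K * (2 * e'\<^sup>2 + 2 * e\<^sup>2)"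
    by linarith
  then have absorb: "sc * e' \<le> 2 * K * e'\<^sup>2 + 2 * K * e\<^sup>2"
    by (simp add: algebra_simps)
  text \<open>Since \<open>e'\<close> is small, the quadratic term in \<open>e'\<close> is absorbed into the left-hand side.\<close>
  have "2 * K * e' \<le> sc / 2"
  proof -
    have "2 * K * e' \<le> 2 * K * (sc / (4 * K + 1))"
      using close K unfolding e'_def sc_def by (intro mult_left_mono) auto
    also have "\<dots> \<le> sc / 2"
      using K sc by (simp add: field_simps)
    finally show ?thesis .
  qed
  then have "2 * K * e'\<^sup>2 \<le> sc / 2 * e'"
    using mult_right_mono[of "2 * K * e'" "sc / 2" e'] unfolding e'_def by (simp add: power2_eq_square algebra_simps)
  with absorb have "sc / 2 * e' \<le> 2 * K * e\<^sup>2"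
    by linarith
  then have "e' \<le> 4 * K * e\<^sup>2 / sc"
    using sc by (simp add: field_simps)
  also have "\<dots> \<le> (4 * K / sc + 1) * e\<^sup>2"
    by (simp add: field_simps)
  finally show ?thesis
    unfolding e_def e'_def sc_def .
qed

lemma subspace_iterate_residual:
  fixes A B C :: "complex mat" and \<theta> :: complex and \<xi> :: real
  assumes n: "0 < n" and A: "A \<in> carrier_mat k k" and B: "B \<in> carrier_mat k n" and C: "C \<in> carrier_mat n k"
    and \<xi>: "0 < \<xi>" and sig: "\<xi> \<le> sigma_min (A - \<theta> \<cdot>\<^sub>m 1\<^sub>m k)" and q: "1 \<le> q"
    and it: "subspace_iterates n Pc d A B C q \<tau> lam V W l"
    and close: "cmod (lam l - \<theta>) \<le> \<xi> / 2" "cmod (lam (Suc l) - \<theta>) \<le> \<xi> / 2"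
    and sig_red: "\<xi> \<le> sigma_min (mat_adjoint (W l) * A * V l - \<theta> \<cdot>\<^sub>m (mat_adjoint (W l) * V l))"
  shows "eta n (Rfun n Pc d A B C (lam (Suc l)))
    \<le> (16 * frob_norm (mat_adjoint C) * frob_norm B / \<xi> ^ 3 * (cmod (lam (Suc l) - lam l))\<^sup>2)\<^sup>2"
proof -
  have "subspace_step n Pc d A B C q \<tau> lam V W l"
    using it unfolding subspace_iterates_def by simp
  then have "dim_row (V l) = k" "dim_row (W l) = k" "orthonormal_cols (V l)" "orthonormal_cols (W l)"
    and "red_eigenvalue n Pc d A B C (V l) (W l) (lam (Suc l))"
    using A unfolding subspace_step_def by auto
  then obtain v where v: "v \<in> carrier_vec n" "cnorm v = 1" and residual:
    "cnorm (Rfun n Pc d A B C (lam (Suc l)) *\<^sub>v v)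
      \<le> 16 * frob_norm (mat_adjoint C) * frob_norm B / \<xi> ^ 3 * (cmod (lam (Suc l) - lam l))\<^sup>2"
    using Rfun_small_at_reduced_eigenvalue[OF A B C _ _ _ _ \<xi> sig sig_red q
        subspace_iterates_colspace[OF it A] close(2,1)] by blast
  have "eta n (Rfun n Pc d A B C (lam (Suc l))) \<le> (cnorm (Rfun n Pc d A B C (lam (Suc l)) *\<^sub>v v))\<^sup>2"
    by (rule eta_le_cnorm_power2[OF Rfun_carrier[OF C B] n v])
  also have "\<dots> \<le> (16 * frob_norm (mat_adjoint C) * frob_norm B / \<xi> ^ 3 * (cmod (lam (Suc l) - lam l))\<^sup>2)\<^sup>2"
    using residual by (intro power_mono) auto
  finally show ?thesis .
qed

lemma eta_quadratic_growth:
  assumes n: "0 < n" and B: "B \<in> carrier_mat k n" and C: "C \<in> carrier_mat n k"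
    and zero: "eta n (Rfun n Pc d A B C \<theta>) = 0"
    and hess: "\<exists>H. hessian_at (\<lambda>s. eta n (Rfun n Pc d A B C s)) \<theta> H \<and> bij H"
  obtains c r where "0 < c" "0 < r"
    "\<And>w. cmod (w - \<theta>) < r \<Longrightarrow> c * (cmod (w - \<theta>))\<^sup>2 \<le> eta n (Rfun n Pc d A B C w)"
proof -
  define f where "f s = eta n (Rfun n Pc d A B C s)" for s
  have f_min: "f \<theta> \<le> f w" for w
    using zero eta_nonneg[OF Rfun_carrier[OF C B] n] unfolding f_def by simp
  obtain g H where "\<forall>\<^sub>F w in nhds \<theta>. (f has_derivative (\<lambda>h. g w \<bullet> h)) (at w)"
    and "(g has_derivative H) (at \<theta>)" and "inj H"
    using hess bij_is_inj unfolding hessian_at_def f_def[symmetric] by blast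
  from quadratic_growth_at_nondegenerate_minimum[OF f_min this]
  obtain c r where c: "0 < c" "0 < r"
    and cr: "\<And>w. cmod (w - \<theta>) < r \<Longrightarrow> c * (cmod (w - \<theta>))\<^sup>2 \<le> f w - f \<theta>"
    by blast
  have "c * (cmod (w - \<theta>))\<^sup>2 \<le> eta n (Rfun n Pc d A B C w)" if "cmod (w - \<theta>) < r" for w
    using cr[OF that] zero unfolding f_def by simp
  with c show ?thesis
    by (rule that)
qed

theorem theorem2p7:
  fixes n k d q :: nat and Pc :: "nat \<Rightarrow> complex mat" and A B C :: "complex mat"
    and \<tau> lstar :: complex and \<xi> :: real
  assumes "n \<ge> 1" and "q \<ge> 2"
    and "\<forall>j\<le>d. Pc j \<in> carrier_mat n n"
    and "A \<in> carrier_mat k k" and "B \<in> carrier_mat k n" and "C \<in> carrier_mat n k"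
    and "\<xi> > 0"
    and "eta n (Rfun n Pc d A B C lstar) = 0"
    and "\<forall>j\<in>{1..<n}. eta j (Rfun n Pc d A B C lstar) > 0"
    and "sigma_min (A - lstar \<cdot>\<^sub>m 1\<^sub>m k) \<ge> \<xi>"
    and "\<exists>H. hessian_at (\<lambda>s. eta n (Rfun n Pc d A B C s)) lstar H \<and> bij H"
  shows "\<exists>Cst>0. \<exists>\<delta>>0. \<forall>lam V W l.
           subspace_iterates n Pc d A B C q \<tau> lam V W l \<and>
           cmod (lam l - lstar) < \<delta> \<and> cmod (lam (Suc l) - lstar) < \<delta> \<and>
           sigma_min (mat_adjoint (W l) * A * V l - lstar \<cdot>\<^sub>m (mat_adjoint (W l) * V l)) \<ge> \<xi>
           \<longrightarrow> cmod (lam (Suc l) - lstar) \<le> Cst * (cmod (lam l - lstar))\<^sup>2"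
proof -
  note A = assms(4) and B = assms(5) and C = assms(6) and \<xi> = assms(7)
  obtain c r where c: "0 < c" and r: "0 < r"
    and growth: "\<And>w. cmod (w - lstar) < r \<Longrightarrow> c * (cmod (w - lstar))\<^sup>2 \<le> eta n (Rfun n Pc d A B C w)"
    using eta_quadratic_growth[OF _ B C assms(8,11)] assms(1) by auto
  define K where "K = 16 * frob_norm (mat_adjoint C) * frob_norm B / \<xi> ^ 3"
  have K: "0 \<le> K"
    unfolding K_def using \<xi> by simp
  define \<delta> where "\<delta> = min (\<xi> / 2) (min r (sqrt c / (4 * K + 1)))"
  have "cmod (lam (Suc l) - lstar) \<le> (4 * K / sqrt c + 1) * (cmod (lam l - lstar))\<^sup>2"
    if it: "subspace_iterates n Pc d A B C q \<tau> lam V W l"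
      and close: "cmod (lam l - lstar) < \<delta>" "cmod (lam (Suc l) - lstar) < \<delta>"
      and sig_red: "\<xi> \<le> sigma_min (mat_adjoint (W l) * A * V l - lstar \<cdot>\<^sub>m (mat_adjoint (W l) * V l))"
    for lam V W l
  proof (rule quadratic_convergence_step[OF c K])
    have "c * (cmod (lam (Suc l) - lstar))\<^sup>2 \<le> eta n (Rfun n Pc d A B C (lam (Suc l)))"
      using growth close(2) unfolding \<delta>_def by simp
    also have "\<dots> \<le> (K * (cmod (lam (Suc l) - lam l))\<^sup>2)\<^sup>2"
      unfolding K_def using close assms(1,2) unfolding \<delta>_def
      by (intro subspace_iterate_residual[OF _ A B C \<xi> assms(10) _ it _ _ sig_red]) auto
    finally show "c * (cmod (lam (Suc l) - lstar))\<^sup>2 \<le> (K * (cmod (lam (Suc l) - lam l))\<^sup>2)\<^sup>2" .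
    show "cmod (lam (Suc l) - lstar) \<le> sqrt c / (4 * K + 1)"
      using close(2) unfolding \<delta>_def by simp
  qed
  moreover have "0 < 4 * K / sqrt c + 1" "0 < \<delta>"
    using K c r \<xi> unfolding \<delta>_def by (auto simp: add_nonneg_pos)
  ultimately show ?thesis
    by blast
qed

end
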